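(* Let $(E,\rho)$ be a metric space, $\varepsilon_0>0$, $k\ge1$, $(I_1,\dots,I_k)\in\mathrm{im}(\pi_k)$, and let $a_0,\dots,a_k\in E$ be distinct with $\rho(a_i,a_{i-1})\ge\varepsilon_0$ for $i=1,\dots,k$. Let $Y_1,\dots,Y_k$ be independent with $Y_i$ uniform on $I_i$, set $Y_0=0$, $Y_{k+1}=1$, and let $X$ be the $\mathbf D([0,1),E)$-valued process with $X(t)=a_i$ for $t\in[Y_i,Y_{i+1})$, $i=0,\dots,k$. Then for all $r\ge0$, $$D(r\,|\,X,\rho_{\mathbf D},1)\ge\varepsilon_0\,\frac{k}{2e}\Big(\prod_{i=1}^k|I_i|\Big)^{1/k}e^{-r/k},$$ where $|I_i|$ denotes the length of $I_i$.
   Context: Dyadic intervals of level $m$: $[(j-1)2^{-m},j2^{-m})$. For distinct $t_1,\dots,t_k\in[0,1)$ build a binary tree with root $[0,1)$; a node (dyadic interval of level $m$) containing at least two of the $t_i$ gets its two level-$(m+1)$ dyadic subintervals as children; nodes containing $0$ or $1$ points are leaves. $\pi_k(t_1,\dots,t_k)$ is the list of the $k$ leaves containing one point, in left-to-right order; $\mathrm{im}(\pi_k)$ is the set of all such lists. $\mathbf D([0,1),E)$: piecewise constant functions $[0,1)\to E$ with finitely many jumps (value after the jump at the jump time), with the projection $\sigma$-field; $\rho_{\mathbf D}(f,g)=\int_0^1\rho(f(t),g(t))dt$. Distortion rate function: $D(r\,|\,X,\rho_{\mathbf D},1)=\inf\{\mathbb E\rho_{\mathbf D}(X,\hat X):\hat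 X\ \mathbf D([0,1),E)\text{-valued},\ I(X;\hat X)\le r\}$, with mutual information $I(X;\hat X)=\int\log\frac{d\mathbb P_{X,\hat X}}{d(\mathbb P_X\otimes\mathbb P_{\hat X})}d\mathbb P_{X,\hat X}$ if absolutely continuous, $\infty$ otherwise. *)

theory Defs
  imports "HOL-Probability.Probability"
begin

text \<open>A dyadic interval of level m is encoded by the pair (m, j), 1 <= j <= 2^m,
  and denotes [(j-1) 2^-m, j 2^-m).\<close>

definition dyad :: "nat \<times> nat \<Rightarrow> real set" where
  "dyad mj = {(real (snd mj) - 1) / 2 ^ fst mj ..< real (snd mj) / 2 ^ fst mj}"

definition dyad_left :: "nat \<times> nat \<Rightarrow> real" where
  "dyad_left mj = (real (snd mj) - 1) / 2 ^ fst mj"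

definition dyad_len :: "nat \<times> nat \<Rightarrow> real" where
  "dyad_len mj = 1 / 2 ^ fst mj"

inductive in_tree :: "real set \<Rightarrow> nat \<times> nat \<Rightarrow> bool" for T where
  root: "in_tree T (0, 1)"
| child: "in_tree T (m, j) \<Longrightarrow> 2 \<le> card (T \<inter> dyad (m, j)) \<Longrightarrow> c \<in> {2 * j - 1, 2 * j}
          \<Longrightarrow> in_tree T (Suc m, c)"

definition one_point_leaves :: "real set \<Rightarrow> (nat \<times> nat) set" where
  "one_point_leaves T = {mj. in_tree T mj \<and> card (T \<inter> dyad mj) = 1}"

definition pi_k :: "real list \<Rightarrow> (nat \<times> nat) list" where
  "pi_k ts = (THE Is. distinct Is \<and> set Is = one_point_leaves (set ts)
                      \<and> sorted_wrt (\<lambda>I J. dyad_left I < dyad_left J) Is)"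

definition im_pi :: "nat \<Rightarrow> (nat \<times> nat) list set" where
  "im_pi k = {pi_k ts | ts. length ts = k \<and> distinct ts \<and> set ts \<subseteq> {0..<1}}"

text \<open>Piecewise constant functions [0,1) -> E with finitely many jumps, right-continuous
  (value after the jump at the jump time); represented as extensional functions on [0,1).\<close>
definition Dset :: "(real \<Rightarrow> 'e) set" where
  "Dset = {f \<in> extensional {0..<1}. \<exists>(n::nat) (s::nat \<Rightarrow> real). s 0 = 0 \<and> s n = 1
            \<and> (\<forall>j<n. s j < s (Suc j)) \<and> (\<forall>j<n. \<forall>t\<in>{s j..<s (Suc j)}. f t = f (s j))}"

definition Dmeas :: "(real \<Rightarrow> 'e::metric_space) measure" where
  "Dmeas = restrict_space (PiM {0..<1} (\<lambda>_. borel)) Dset"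

definition rhoD :: "(real \<Rightarrow> 'e::metric_space) \<Rightarrow> (real \<Rightarrow> 'e) \<Rightarrow> ennreal" where
  "rhoD f g = (\<integral>\<^sup>+ t \<in> {0..<1}. ennreal (dist (f t) (g t)) \<partial>lborel)"

definition mutual_inf :: "'a measure \<Rightarrow> 'b measure \<Rightarrow> ('a \<times> 'b) measure \<Rightarrow> ereal" where
  "mutual_inf S T Q =
    (let P = distr Q S fst \<Otimes>\<^sub>M distr Q T snd;
         L = (\<lambda>z. ln (enn2real (RN_deriv P Q z)))
     in if absolutely_continuous P Q
        then enn2ereal (\<integral>\<^sup>+ z. ennreal (max 0 (L z)) \<partial>Q)
             - enn2ereal (\<integral>\<^sup>+ z. ennreal (max 0 (- L z)) \<partial>Q)
        else \<infinity>)"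

text \<open>D(r | X, rho_D, 1), expressed through the law PX of X: infimum over all joint laws of
  (X, Xhat) on D x D with first marginal PX and mutual information at most r.\<close>
definition distortion_rate :: "real \<Rightarrow> (real \<Rightarrow> 'e::metric_space) measure \<Rightarrow> ennreal" where
  "distortion_rate r PX =
     (INF Q \<in> {Q. prob_space Q \<and> sets Q = sets (Dmeas \<Otimes>\<^sub>M Dmeas)
                 \<and> distr Q Dmeas fst = PX \<and> mutual_inf Dmeas Dmeas Q \<le> ereal r}.
        \<integral>\<^sup>+ z. rhoD (fst z) (snd z) \<partial>Q)"

text \<open>The process X: X(t) = a_i on [Y_i, Y_{i+1}) (Y_0 = 0, Y_{k+1} = 1), written as
  X(t) = a_{#{j in 1..k. Y_j <= t}} for t in [0,1), which agrees with the former whenever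
  Y_1 < ... < Y_k (almost surely) and is always an element of D.\<close>
definition Xproc :: "nat \<Rightarrow> (nat \<Rightarrow> 'e) \<Rightarrow> (nat \<Rightarrow> 'w \<Rightarrow> real) \<Rightarrow> 'w \<Rightarrow> real \<Rightarrow> 'e" where
  "Xproc k a Y \<omega> = restrict (\<lambda>t. a (card {j \<in> {1..k}. Y j \<omega> \<le> t})) {0..<1}"

end

theory Submission
  imports Defs
begin

text \<open>The bound is a Donsker--Varadhan argument. If for every fixed path g the exponential
  moment E exp (- lam \<rho>(X, g)) is at most C, then every coupling of X and its reconstruction
  with mutual information at most r has expected distortion at least (- ln C - r) / lam.
  To bound the moment, fix g and look at the dyadic interval I_i: there X jumps once, from
  a (i - 1) to a i at time Y_i, and the distortions on I_i for two jump times y, y' add up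
  to at least \<epsilon>0 |y - y'|; hence there is a centre m_i with distortion at least
  \<epsilon>0 |Y_i - m_i| on I_i. The intervals are disjoint and the Y_i independent and uniform,
  so the moment is at most \<Prod> 2 / (lam \<epsilon>0 |I_i|), and optimising in lam gives the claim.\<close>

section \<open>Evaluating paths of D([0,1),E)\<close>

text \<open>Paths are extensional and the projection \<sigma>-field only sees coordinates in [0,1), so
  paths are evaluated at a time clamped into [0,1).\<close>

definition unit_clamp :: "real \<Rightarrow> real" where
  "unit_clamp t = (if t \<in> {0..<1} then t else 0)"

lemma unit_clamp_in: "unit_clamp t \<in> {0..<1}"
  by (auto simp: unit_clamp_def)

lemma unit_clamp_eq [simp]: "t \<in> {0..<1} \<Longrightarrow> unit_clamp t = t"
  by (simp add: unit_clamp_def)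

lemma unit_clamp_measurable [measurable]: "unit_clamp \<in> borel_measurable borel"
  unfolding unit_clamp_def by measurable

lemma space_Dmeas: "space (Dmeas :: (real \<Rightarrow> 'e::metric_space) measure) = Dset"
  unfolding Dmeas_def by (auto simp: space_restrict_space space_PiM Dset_def PiE_def)

lemma Dset_locally_const_right:
  assumes f: "f \<in> Dset" and c: "c \<in> {0..<1::real}"
  shows "\<exists>d>0. \<forall>u. c \<le> u \<and> u < c + d \<longrightarrow> f u = f c"
proof -
  from f obtain n s where s: "s 0 = 0" "s n = 1" "\<forall>j<n. s j < s (Suc j)"
     "\<forall>j<n. \<forall>t\<in>{s j..<s (Suc j)}. f t = f (s j)" unfolding Dset_def by blast
  define A where "A = {j. j \<le> n \<and> s j \<le> c}"
  have fin: "finite A" unfolding A_def by auto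
  have "0 \<in> A" using s c by (auto simp: A_def)
  define j where "j = Max A"
  have jA: "j \<in> A" using fin \<open>0 \<in> A\<close> unfolding j_def by (intro Max_in) auto
  have "j \<noteq> n" using jA s c by (auto simp: A_def)
  hence jn: "j < n" using jA by (auto simp: A_def)
  have next_gt: "c < s (Suc j)"
  proof (rule ccontr)
    assume "\<not> c < s (Suc j)"
    hence "Suc j \<in> A" using jn by (auto simp: A_def)
    hence "Suc j \<le> j" using fin unfolding j_def by (intro Max_ge) auto
    thus False by simp
  qed
  have sj: "s j \<le> c" using jA by (auto simp: A_def)
  show ?thesis
  proof (intro exI[of _ "s (Suc j) - c"] conjI allI impI)
    show "0 < s (Suc j) - c" using next_gt by simp
    fix u assume u: "c \<le> u \<and> u < c + (s (Suc j) - c)"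
    have "f u = f (s j)" using s(4)[rule_format, of j u] jn u sj by simp
    moreover have "f c = f (s j)" using s(4)[rule_format, of j c] jn next_gt sj by simp
    ultimately show "f u = f c" by simp
  qed
qed

lemma ceiling_dyadic_approx:
  fixes c :: real assumes c: "c \<in> {0..<1}" and d: "d > 0"
  shows "\<forall>\<^sub>F n in sequentially. c \<le> real_of_int \<lceil>2^n * c\<rceil> / 2^n \<and>
          real_of_int \<lceil>2^n * c\<rceil> / 2^n < c + d \<and> real_of_int \<lceil>2^n * c\<rceil> / 2^n < 1"
proof -
  have "(\<lambda>n. (1/2::real)^n) \<longlonglongrightarrow> 0" by (intro LIMSEQ_power_zero) auto
  moreover have "0 < min d (1 - c)" using c d by auto
  ultimately have "\<forall>\<^sub>F n in sequentially. (1/2::real)^n < min d (1 - c)"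
    by (rule order_tendstoD)
  then show ?thesis
  proof eventually_elim
    case (elim n)
    have p: "(0::real) < 2^n" by simp
    define x where "x = real_of_int \<lceil>2^n * c\<rceil>"
    have cc: "x - 1 < 2^n * c \<and> 2^n * c \<le> x" unfolding x_def by (rule ceiling_correct)
    have "c \<le> x / 2^n" using cc p by (simp add: le_divide_eq mult.commute)
    moreover have "x < (c + (1/2)^n) * 2^n" using cc p by (simp add: algebra_simps power_divide)
    hence "x / 2^n < c + (1/2)^n" using p by (simp add: divide_less_eq)
    ultimately show ?case using elim unfolding x_def by linarith
  qed
qed

lemma measurable_Dmeas_eval:
  "(\<lambda>f. f (unit_clamp x)) \<in> borel_measurable (Dmeas :: (real \<Rightarrow> 'e::metric_space) measure)"
  unfolding Dmeas_def
  by (intro measurable_restrict_space1 measurable_component_singleton) (rule unit_clamp_in)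

text \<open>Joint measurability holds because a path is right-continuous: it is the pointwise limit of
  its evaluations at the dyadic times \<lceil>2^n t\<rceil> / 2^n, each of which is a countable
  case distinction over measurable evaluations.\<close>

lemma measurable_Dmeas_eval_pair:
  "(\<lambda>(f, t). f (unit_clamp t))
     \<in> borel_measurable ((Dmeas :: (real \<Rightarrow> 'e::metric_space) measure) \<Otimes>\<^sub>M (lborel :: real measure))"
proof (rule borel_measurable_LIMSEQ_metric)
  fix n :: nat
  let ?N = "(Dmeas :: (real \<Rightarrow> 'e) measure) \<Otimes>\<^sub>M (lborel :: real measure)"
  have level: "(\<lambda>(f :: real \<Rightarrow> 'e, t :: real). \<lceil>2^n * unit_clamp t\<rceil>) \<in> measurable ?N (count_space UNIV)"
    by measurable
  have eval: "(\<lambda>(f :: real \<Rightarrow> 'e, t :: real). f (unit_clamp (real_of_int i / 2^n))) \<in> borel_measurable ?N"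
    for i :: int
    using measurable_compose[OF measurable_fst[of _ lborel] measurable_Dmeas_eval[of "real_of_int i / 2^n"]]
    unfolding split_beta' by simp
  show "(\<lambda>(f :: real \<Rightarrow> 'e, t). f (unit_clamp (real_of_int \<lceil>2^n * unit_clamp t\<rceil> / 2^n)))
          \<in> borel_measurable ?N"
    using measurable_compose_countable'[OF eval level] unfolding split_beta' by simp
next
  fix z assume z: "z \<in> space ((Dmeas :: (real \<Rightarrow> 'e) measure) \<Otimes>\<^sub>M (lborel :: real measure))"
  obtain f and t :: real where zft: "z = (f, t)" by (cases z)
  have f: "f \<in> Dset" using z zft by (simp add: space_pair_measure space_Dmeas)
  define c where "c = unit_clamp t"
  have c: "c \<in> {0..<1}" unfolding c_def by (rule unit_clamp_in)
  obtain d where d: "d > 0" "\<forall>u. c \<le> u \<and> u < c + d \<longrightarrow> f u = f c"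
    using Dset_locally_const_right[OF f c] by blast
  have "\<forall>\<^sub>F n in sequentially. f (unit_clamp (real_of_int \<lceil>2^n * c\<rceil> / 2^n)) = f c"
    using ceiling_dyadic_approx[OF c d(1)]
  proof eventually_elim
    case (elim n)
    hence "unit_clamp (real_of_int \<lceil>2^n * c\<rceil> / 2^n) = real_of_int \<lceil>2^n * c\<rceil> / 2^n"
      using c by simp
    thus ?case using elim d(2)[rule_format, of "real_of_int \<lceil>2^n * c\<rceil> / 2^n"] by simp
  qed
  then show "(\<lambda>n. case z of (f, t) \<Rightarrow> f (unit_clamp (real_of_int \<lceil>2^n * unit_clamp t\<rceil> / 2^n)))
               \<longlonglongrightarrow> (case z of (f, t) \<Rightarrow> f (unit_clamp t))"
    unfolding zft c_def by (simp add: tendsto_eventually)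
qed

lemma measurable_Dmeas_eval_compose:
  assumes "h \<in> measurable N (Dmeas :: (real \<Rightarrow> 'e::metric_space) measure)"
    and "u \<in> measurable N (lborel :: real measure)"
  shows "(\<lambda>w. h w (unit_clamp (u w))) \<in> borel_measurable N"
  using measurable_compose[OF measurable_Pair[OF assms] measurable_Dmeas_eval_pair] by simp

lemma measurable_Dset_path:
  fixes g :: "real \<Rightarrow> 'e::metric_space"
  assumes "g \<in> Dset"
  shows "(\<lambda>t. g (unit_clamp t)) \<in> borel_measurable (lborel :: real measure)"
  using assms by (intro measurable_Dmeas_eval_compose) (auto simp: space_Dmeas)

lemma measurable_dist_Dset_path:
  fixes g :: "real \<Rightarrow> 'e::metric_space"
  assumes "g \<in> Dset"
  shows "(\<lambda>t. ennreal (dist x (g (unit_clamp t)))) \<in> borel_measurable (lborel :: real measure)"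
  by (intro measurable_compose[OF _ measurable_ennreal]
        borel_measurable_continuous_on[OF _ measurable_Dset_path[OF assms]])
     (intro continuous_intros)

section \<open>A measurable minorant of the distortion\<close>

text \<open>Without separability of E, (f, g) \<mapsto> dist (f t) (g t) need not be measurable on the
  product \<sigma>-field. Keeping only the times at which f sits in one of the states a j gives a
  measurable functional that is still below rhoD (state_distortion_le_rhoD).\<close>

definition state_distortion ::
    "nat \<Rightarrow> (nat \<Rightarrow> 'e::metric_space) \<Rightarrow> (real \<Rightarrow> 'e) \<Rightarrow> (real \<Rightarrow> 'e) \<Rightarrow> ennreal" where
  "state_distortion k a f g = (\<integral>\<^sup>+ t. indicator {0..<1} t *
      (\<Sum>j\<in>{0..k}. indicator {a j} (f (unit_clamp t)) * ennreal (dist (a j) (g (unit_clamp t)))) \<partial>lborel)"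

lemma measurable_state_distortion:
  "(\<lambda>z. state_distortion k a (fst z) (snd z))
     \<in> borel_measurable ((Dmeas :: (real \<Rightarrow> 'e::metric_space) measure) \<Otimes>\<^sub>M Dmeas)"
proof -
  let ?N = "((Dmeas :: (real \<Rightarrow> 'e) measure) \<Otimes>\<^sub>M Dmeas) \<Otimes>\<^sub>M (lborel :: real measure)"
  have f: "(\<lambda>w. fst (fst w) (unit_clamp (snd w))) \<in> borel_measurable ?N"
    by (rule measurable_Dmeas_eval_compose) measurable
  have g: "(\<lambda>w. snd (fst w) (unit_clamp (snd w))) \<in> borel_measurable ?N"
    by (rule measurable_Dmeas_eval_compose) measurable
  have ind: "(\<lambda>w. indicator {a j} (fst (fst w) (unit_clamp (snd w))) :: ennreal) \<in> borel_measurable ?N" for j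
    using measurable_compose[OF f borel_measurable_indicator[of "{a j}" borel]] by simp
  have dist: "(\<lambda>w. ennreal (dist (a j) (snd (fst w) (unit_clamp (snd w))))) \<in> borel_measurable ?N" for j
    by (intro measurable_compose[OF _ measurable_ennreal] borel_measurable_continuous_on[OF _ g])
       (intro continuous_intros)
  have "case_prod (\<lambda>z t. indicator {0..<1} t * (\<Sum>j\<in>{0..k}. indicator {a j} (fst z (unit_clamp t))
          * ennreal (dist (a j) (snd z (unit_clamp t))))) \<in> borel_measurable ?N"
    unfolding split_beta' using ind dist by measurable
  from lborel.borel_measurable_nn_integral[OF this]
  show ?thesis unfolding state_distortion_def by simp
qed

lemma state_distortion_le_rhoD:
  fixes a :: "nat \<Rightarrow> 'e::metric_space"
  assumes inj: "inj_on a {0..k}"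
  shows "state_distortion k a f g \<le> rhoD f g"
  unfolding state_distortion_def rhoD_def
proof (rule nn_integral_mono)
  fix t :: real
  have "(\<Sum>j\<in>{0..k}. indicator {a j} (f t) * ennreal (dist (a j) (g t))) \<le> ennreal (dist (f t) (g t))"
  proof (cases "\<exists>j0\<in>{0..k}. a j0 = f t")
    case False
    hence "(\<Sum>j\<in>{0..k}. indicator {a j} (f t) * ennreal (dist (a j) (g t))) = 0"
      by (intro sum.neutral) (auto simp: indicator_def)
    thus ?thesis by simp
  next
    case True
    then obtain j0 where j0: "j0 \<in> {0..k}" "a j0 = f t" by blast
    have "indicator {a j} (f t) * ennreal (dist (a j) (g t))
        = (if j = j0 then ennreal (dist (f t) (g t)) else 0)" if "j \<in> {0..k}" for j
    proof -
      have "f t = a j \<longleftrightarrow> j = j0" using j0(2) inj_on_eq_iff[OF inj that j0(1)] by auto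
      thus ?thesis using j0(2) by (simp add: indicator_def)
    qed
    hence "(\<Sum>j\<in>{0..k}. indicator {a j} (f t) * ennreal (dist (a j) (g t)))
        = (\<Sum>j\<in>{0..k}. if j = j0 then ennreal (dist (f t) (g t)) else 0)"
      by (rule sum.cong[OF refl])
    thus ?thesis using j0 by simp
  qed
  thus "indicator {0..<1} t * (\<Sum>j\<in>{0..k}. indicator {a j} (f (unit_clamp t))
          * ennreal (dist (a j) (g (unit_clamp t)))) \<le> ennreal (dist (f t) (g t)) * indicator {0..<1} t"
    by (cases "t \<in> {0..<1}") (simp_all add: mult.commute)
qed

section \<open>A Donsker--Varadhan lower bound\<close>

definition exp_loss :: "real \<Rightarrow> ennreal \<Rightarrow> ennreal" where
  "exp_loss l x = (if x = \<infinity> then 0 else ennreal (exp (- l * enn2real x)))"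

lemma exp_loss_measurable [measurable]: "exp_loss l \<in> borel_measurable borel"
  unfolding exp_loss_def by measurable

lemma mult_max_neg_ln_le_1: "x \<ge> 0 \<Longrightarrow> x * max 0 (- ln x) \<le> (1::real)"
proof (cases "x = 0")
  case False
  assume x: "x \<ge> 0"
  hence xp: "x > 0" using False by simp
  show ?thesis
  proof (cases "x \<le> 1")
    case True
    have "- ln x = ln (1/x)" using xp by (simp add: ln_div)
    also have "\<dots> \<le> 1/x - 1" using xp by (intro ln_le_minus_one) simp
    finally have "x * (- ln x) \<le> x * (1/x - 1)" using xp by (intro mult_left_mono) auto
    also have "\<dots> = 1 - x" using xp by (simp add: field_simps)
    finally show ?thesis using xp by (auto simp: max_def)
  next
    case False
    hence "ln x \<ge> 0" by simp
    thus ?thesis by (simp add: max_def)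
  qed
qed simp

text \<open>The pointwise form of the variational inequality: ln y \<le> y - 1 applied to
  y = exp (-l s) / (C x), with every term split into nonnegative parts.\<close>

lemma exp_loss_variational_ineq:
  fixes x l C :: real and s :: ennreal
  assumes x: "x > 0" and l: "l > 0" and C: "C > 0"
  shows "1 + ennreal (max 0 (- ln x)) + ennreal (max 0 (- ln C))
    \<le> ennreal l * s + ennreal (max 0 (ln x)) + exp_loss l s * ennreal (1 / C) * ennreal (1 / x)
       + ennreal (max 0 (ln C))"
proof (cases "s = \<infinity>")
  case True thus ?thesis using l by (simp add: ennreal_mult_top)
next
  case False
  then obtain s' where s: "s = ennreal s'" "s' \<ge> 0" by (cases s) auto
  define y where "y = exp (- l * s') / (C * x)"
  have y: "y > 0" using x C by (simp add: y_def)
  have "ln y \<le> y - 1" by (rule ln_le_minus_one[OF y])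
  moreover have "ln y = - l * s' - ln C - ln x"
    using x C by (simp add: y_def ln_div ln_mult)
  ultimately have real_ineq: "1 + max 0 (- ln x) + max 0 (- ln C) \<le> l * s' + max 0 (ln x) + y + max 0 (ln C)"
    by linarith
  have "exp_loss l s * ennreal (1 / C) * ennreal (1 / x) = ennreal y"
    using s x C by (simp add: exp_loss_def y_def ennreal_mult[symmetric] divide_inverse mult.assoc)
  moreover have "ennreal (1 + max 0 (- ln x) + max 0 (- ln C))
      \<le> ennreal (l * s' + max 0 (ln x) + y + max 0 (ln C))"
    by (rule ennreal_leI[OF real_ineq])
  ultimately show ?thesis
    using s l y by (simp add: ennreal_mult)
qed

lemma nn_integral_neg_part_log_density_le_1:
  assumes "prob_space P"
  shows "(\<integral>\<^sup>+z. p z * ennreal (max 0 (- ln (enn2real (p z)))) \<partial>P) \<le> 1"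
proof -
  interpret prob_space P by fact
  have "(\<integral>\<^sup>+z. p z * ennreal (max 0 (- ln (enn2real (p z)))) \<partial>P) \<le> (\<integral>\<^sup>+z. 1 \<partial>P)"
  proof (rule nn_integral_mono)
    fix z
    show "p z * ennreal (max 0 (- ln (enn2real (p z)))) \<le> 1"
    proof (cases "p z")
      case (real x)
      hence "p z * ennreal (max 0 (- ln (enn2real (p z)))) = ennreal (x * max 0 (- ln x))"
        by (simp add: ennreal_mult)
      also have "\<dots> \<le> 1" using mult_max_neg_ln_le_1[of x] real by simp
      finally show ?thesis .
    qed simp
  qed
  thus ?thesis by (simp add: emeasure_space_1)
qed

lemma nn_integral_density_div_le:
  assumes Q: "Q = density P p" and p: "p \<in> borel_measurable P" and fin: "AE z in P. p z \<noteq> \<infinity>"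
    and f: "f \<in> borel_measurable P"
  shows "(\<integral>\<^sup>+z. f z * ennreal (1 / enn2real (p z)) \<partial>Q) \<le> (\<integral>\<^sup>+z. f z \<partial>P)"
proof -
  have "(\<integral>\<^sup>+z. f z * ennreal (1 / enn2real (p z)) \<partial>Q) = (\<integral>\<^sup>+z. p z * (f z * ennreal (1 / enn2real (p z))) \<partial>P)"
    unfolding Q using p f by (simp add: nn_integral_density)
  also have "\<dots> \<le> (\<integral>\<^sup>+z. f z \<partial>P)"
  proof (rule nn_integral_mono_AE)
    show "AE z in P. p z * (f z * ennreal (1 / enn2real (p z))) \<le> f z"
      using fin
    proof eventually_elim
      case (elim z)
      then obtain x where x: "p z = ennreal x" "x \<ge> 0" by (cases "p z") auto
      show ?case
      proof (cases "x = 0")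
        case False
        hence "p z * ennreal (1 / enn2real (p z)) = 1" using x by (simp flip: ennreal_mult)
        thus ?thesis by (simp add: mult.left_commute)
      qed (use x in simp)
    qed
  qed
  finally show ?thesis .
qed

lemma ennreal_rate_arith:
  fixes S Pos Neg :: ennreal
  assumes main: "1 + Neg + ennreal (max 0 (- K)) \<le> ennreal l * S + Pos + 1 + ennreal (max 0 K)"
    and Neg: "Neg \<le> 1" and info: "enn2ereal Pos - enn2ereal Neg \<le> ereal r" and l: "l > 0"
  shows "ennreal ((- K - r) / l) \<le> S"
proof (cases S)
  case (real s)
  obtain n where n: "Neg = ennreal n" "n \<ge> 0" using Neg by (cases Neg) (auto simp: top_unique)
  have "enn2ereal Pos \<le> ereal (r + n)"
    using info n by (cases "enn2ereal Pos") auto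
  then obtain q where q: "Pos = ennreal q" "q \<ge> 0" "q \<le> r + n"
    by (cases Pos) auto
  have "ennreal (1 + n + max 0 (- K)) \<le> ennreal (l * s + q + 1 + max 0 K)"
    using main real n q l by (simp add: ennreal_mult)
  hence "1 + n + max 0 (- K) \<le> l * s + q + 1 + max 0 K"
    using real q l by (subst (asm) ennreal_le_iff) auto
  hence "- K - r \<le> l * s" using q by (auto simp: max_def split: if_splits)
  thus ?thesis using real l by (simp add: divide_le_eq mult.commute ennreal_leI)
qed simp


lemma nn_integral_ge_of_log_density_bound:
  fixes psi :: "'a \<Rightarrow> ennreal"
  assumes P: "prob_space P" and Q: "prob_space (density P p)"
    and p [measurable]: "p \<in> borel_measurable P" and fin: "AE z in P. p z \<noteq> \<infinity>"
    and psi [measurable]: "psi \<in> borel_measurable P" and l: "l > 0" and C: "C > 0"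
    and moment: "(\<integral>\<^sup>+z. exp_loss l (psi z) \<partial>P) \<le> ennreal C"
    and info: "enn2ereal (\<integral>\<^sup>+z. ennreal (max 0 (ln (enn2real (p z)))) \<partial>density P p)
             - enn2ereal (\<integral>\<^sup>+z. ennreal (max 0 (- ln (enn2real (p z)))) \<partial>density P p) \<le> ereal r"
  shows "ennreal ((- ln C - r) / l) \<le> (\<integral>\<^sup>+z. psi z \<partial>density P p)"
proof -
  interpret Q: prob_space "density P p" by fact
  have Q1: "emeasure (density P p) (space P) = 1" using Q.emeasure_space_1 by simp
  define L where "L z = ln (enn2real (p z))" for z
  define Pos where "Pos = (\<integral>\<^sup>+z. ennreal (max 0 (L z)) \<partial>density P p)"
  define Neg where "Neg = (\<integral>\<^sup>+z. ennreal (max 0 (- L z)) \<partial>density P p)"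
  define W where "W z = exp_loss l (psi z) * ennreal (1 / C) * ennreal (1 / enn2real (p z))" for z
  have Neg: "Neg \<le> 1"
    unfolding Neg_def L_def
    using nn_integral_neg_part_log_density_le_1[OF P, of p] by (simp add: nn_integral_density)
  have "(\<integral>\<^sup>+z. W z \<partial>density P p) \<le> (\<integral>\<^sup>+z. exp_loss l (psi z) * ennreal (1 / C) \<partial>P)"
    unfolding W_def by (rule nn_integral_density_div_le[OF refl p fin]) measurable
  also have "\<dots> = (\<integral>\<^sup>+z. exp_loss l (psi z) \<partial>P) * ennreal (1 / C)"
    by (rule nn_integral_multc) measurable
  also have "\<dots> \<le> ennreal C * ennreal (1 / C)"
    using moment by (rule mult_right_mono) simp
  also have "\<dots> = 1" using C by (simp flip: ennreal_mult)
  finally have W: "(\<integral>\<^sup>+z. W z \<partial>density P p) \<le> 1" .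
  have "AE z in density P p. 0 < p z \<and> p z \<noteq> \<infinity>"
    using fin by (subst AE_density) (auto simp: zero_less_iff_neq_zero)
  hence "AE z in density P p. 1 + ennreal (max 0 (- L z)) + ennreal (max 0 (- ln C))
      \<le> ennreal l * psi z + ennreal (max 0 (L z)) + W z + ennreal (max 0 (ln C))"
  proof eventually_elim
    case (elim z)
    then obtain x where "p z = ennreal x" "x > 0" by (cases "p z") auto
    thus ?case using exp_loss_variational_ineq[OF _ l C] by (simp add: L_def W_def)
  qed
  hence "(\<integral>\<^sup>+z. 1 + ennreal (max 0 (- L z)) + ennreal (max 0 (- ln C)) \<partial>density P p)
      \<le> (\<integral>\<^sup>+z. ennreal l * psi z + ennreal (max 0 (L z)) + W z + ennreal (max 0 (ln C)) \<partial>density P p)"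
    by (rule nn_integral_mono_AE)
  hence "1 + Neg + ennreal (max 0 (- ln C))
      \<le> ennreal l * (\<integral>\<^sup>+z. psi z \<partial>density P p) + Pos + (\<integral>\<^sup>+z. W z \<partial>density P p) + ennreal (max 0 (ln C))"
    unfolding Pos_def Neg_def L_def W_def
    by (simp add: nn_integral_add nn_integral_cmult Q1)
  hence main: "1 + Neg + ennreal (max 0 (- ln C))
      \<le> ennreal l * (\<integral>\<^sup>+z. psi z \<partial>density P p) + Pos + 1 + ennreal (max 0 (ln C))"
    using W by (meson add_left_mono add_right_mono order_trans)
  show ?thesis
    using ennreal_rate_arith[OF main Neg] info l unfolding Pos_def Neg_def L_def by simp
qed

lemma nn_integral_pair_measure_le:
  fixes h :: "'a \<times> 'b \<Rightarrow> ennreal"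
  assumes "prob_space \<mu>" "prob_space \<nu>"
    and h: "h \<in> borel_measurable (\<mu> \<Otimes>\<^sub>M \<nu>)"
    and sections: "\<And>g. g \<in> space \<nu> \<Longrightarrow> (\<integral>\<^sup>+f. h (f, g) \<partial>\<mu>) \<le> C"
  shows "(\<integral>\<^sup>+z. h z \<partial>(\<mu> \<Otimes>\<^sub>M \<nu>)) \<le> C"
proof -
  interpret \<mu>: prob_space \<mu> by fact
  interpret \<nu>: prob_space \<nu> by fact
  interpret pair_prob_space \<mu> \<nu> ..
  have "(\<integral>\<^sup>+z. h z \<partial>(\<mu> \<Otimes>\<^sub>M \<nu>)) = (\<integral>\<^sup>+g. (\<integral>\<^sup>+f. h (f, g) \<partial>\<mu>) \<partial>\<nu>)"
    using nn_integral_snd[OF h] by simp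
  also have "\<dots> \<le> (\<integral>\<^sup>+g. C \<partial>\<nu>)"
    using sections by (intro nn_integral_mono) simp
  also have "\<dots> = C" by (simp add: \<nu>.emeasure_space_1)
  finally show ?thesis .
qed

lemma nn_integral_ge_of_mutual_inf_le:
  fixes Q :: "('a \<times> 'b) measure" and psi :: "'a \<times> 'b \<Rightarrow> ennreal"
  assumes Q: "prob_space Q" and Qs: "sets Q = sets (S \<Otimes>\<^sub>M T)"
    and info: "mutual_inf S T Q \<le> ereal r"
    and psi: "psi \<in> borel_measurable (S \<Otimes>\<^sub>M T)" and l: "l > 0" and C: "C > 0"
    and moment: "\<And>g. g \<in> space T \<Longrightarrow> (\<integral>\<^sup>+f. exp_loss l (psi (f, g)) \<partial>distr Q S fst) \<le> ennreal C"
  shows "ennreal ((- ln C - r) / l) \<le> (\<integral>\<^sup>+z. psi z \<partial>Q)"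
proof -
  interpret Q: prob_space Q by fact
  define P where "P = distr Q S fst \<Otimes>\<^sub>M distr Q T snd"
  define p where "p = RN_deriv P Q"
  have "fst \<in> measurable Q S" "snd \<in> measurable Q T"
    by (simp_all add: measurable_cong_sets[OF Qs refl])
  hence marginals: "prob_space (distr Q S fst)" "prob_space (distr Q T snd)"
    by (simp_all add: Q.prob_space_distr)
  have P: "prob_space P"
    unfolding P_def using marginals by (intro prob_space_pair)
  interpret P: prob_space P by fact
  have sets_P: "sets P = sets Q" unfolding P_def Qs by (intro sets_pair_measure_cong) auto
  have ac: "absolutely_continuous P Q"
    using info unfolding mutual_inf_def P_def[symmetric] by (auto simp: Let_def split: if_splits)
  have Q_density: "Q = density P p"
    unfolding p_def using P.density_RN_deriv[OF ac sets_P[symmetric]] by simp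
  have p: "p \<in> borel_measurable P" unfolding p_def by simp
  have fin: "AE z in P. p z \<noteq> \<infinity>"
    unfolding p_def using P.RN_deriv_finite[OF Q.sigma_finite_measure_axioms ac sets_P[symmetric]] .
  have psi_P: "psi \<in> borel_measurable P"
    using psi by (simp add: measurable_cong_sets[OF sets_P[unfolded Qs] refl])
  have "(\<lambda>z. exp_loss l (psi z)) \<in> borel_measurable P"
    using measurable_compose[OF psi_P exp_loss_measurable] .
  hence moment_P: "(\<integral>\<^sup>+z. exp_loss l (psi z) \<partial>P) \<le> ennreal C"
    unfolding P_def using marginals moment by (intro nn_integral_pair_measure_le) auto
  have "mutual_inf S T Q = enn2ereal (\<integral>\<^sup>+z. ennreal (max 0 (ln (enn2real (p z)))) \<partial>Q)
      - enn2ereal (\<integral>\<^sup>+z. ennreal (max 0 (- ln (enn2real (p z)))) \<partial>Q)"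
    using ac unfolding mutual_inf_def P_def[symmetric] p_def by (simp add: Let_def)
  hence "ennreal ((- ln C - r) / l) \<le> (\<integral>\<^sup>+z. psi z \<partial>density P p)"
    using Q info
    by (intro nn_integral_ge_of_log_density_bound[OF P _ p fin psi_P l C moment_P])
       (simp_all add: Q_density[symmetric])
  thus ?thesis using Q_density by simp
qed

section \<open>Dyadic trees and the image of pi_k\<close>

lemma dyad_left_mem: "dyad_left I \<in> dyad I"
  unfolding dyad_def dyad_left_def by (simp add: divide_strict_right_mono)

lemma dyad_eq_interval: "dyad I = {dyad_left I ..< dyad_left I + dyad_len I}"
  unfolding dyad_def dyad_left_def dyad_len_def by (simp add: add_divide_distrib[symmetric])

lemma dyad_len_pos: "dyad_len I > 0"
  by (simp add: dyad_len_def)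

lemma dyad_borel [measurable]: "dyad I \<in> sets borel"
  unfolding dyad_eq_interval by simp

lemma emeasure_dyad: "emeasure lborel (dyad I) = ennreal (dyad_len I)"
  unfolding dyad_eq_interval by (simp add: dyad_len_def)

lemma mem_dyad_iff_floor:
  assumes j: "j \<ge> 1"
  shows "t \<in> dyad (m, j) \<longleftrightarrow> \<lfloor>2^m * t\<rfloor> = int j - 1"
proof -
  have p: "(0::real) < 2^m" by simp
  have "t \<in> dyad (m, j) \<longleftrightarrow> real j - 1 \<le> 2^m * t \<and> 2^m * t < real j"
    unfolding dyad_def using p by (simp add: divide_le_eq less_divide_eq mult.commute)
  also have "\<dots> \<longleftrightarrow> \<lfloor>2^m * t\<rfloor> = int j - 1"
    using j by (simp add: floor_eq_iff)
  finally show ?thesis .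
qed

lemma floor_pow2_mult_div:
  fixes x :: real assumes "m' \<le> m"
  shows "\<lfloor>2^m' * x\<rfloor> = \<lfloor>2^m * x\<rfloor> div 2^(m - m')"
proof -
  have e: "(2::real)^m = 2^m' * 2^(m-m')" using assms by (simp add: power_add[symmetric])
  have "\<lfloor>2^m * x / real_of_int (2^(m - m'))\<rfloor> = \<lfloor>2^m * x\<rfloor> div 2^(m - m')"
    by (rule floor_divide_real_eq_div) simp
  moreover have "2^m * x / real_of_int (2^(m - m')) = 2^m' * x" using e by simp
  ultimately show ?thesis by simp
qed

lemma mem_dyad_ancestor:
  assumes j: "j \<ge> 1" and t: "t \<in> dyad (m, j)" and mm: "m' \<le> m"
  shows "t \<in> dyad (m', (j - 1) div 2^(m - m') + 1)"
proof -
  have "\<lfloor>2^m * t\<rfloor> = int j - 1" using mem_dyad_iff_floor[OF j] t by simp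
  hence "\<lfloor>2^m' * t\<rfloor> = (int j - 1) div 2^(m - m')" using floor_pow2_mult_div[OF mm, of t] by simp
  also have "(int j - 1) = int (j - 1)" using j by simp
  also have "int (j - 1) div 2^(m - m') = int ((j - 1) div 2^(m - m'))" by (simp add: zdiv_int)
  finally show ?thesis by (subst mem_dyad_iff_floor) auto
qed

lemma in_tree_ancestors:
  assumes "in_tree T mj"
  shows "snd mj \<ge> 1 \<and> (\<forall>m'<fst mj. 2 \<le> card (T \<inter> dyad (m', (snd mj - 1) div 2^(fst mj - m') + 1)))"
  using assms
proof (induction rule: in_tree.induct)
  case root thus ?case by simp
next
  case (child m j c)
  have j: "j \<ge> 1" using child.IH by simp
  have c: "c - 1 = 2 * (j - 1) \<or> c - 1 = 2 * (j - 1) + 1" using child.hyps(3) j by auto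
  have cdiv: "(c - 1) div 2 = j - 1" using c by auto
  have "c \<ge> 1" using child.hyps(3) j by auto
  moreover have "2 \<le> card (T \<inter> dyad (m', (c - 1) div 2^(Suc m - m') + 1))" if m': "m' < Suc m" for m'
  proof (cases "m' = m")
    case True
    thus ?thesis using cdiv j child.hyps(2) by simp
  next
    case False
    hence mm: "m' < m" using m' by simp
    have "(c - 1) div 2^(Suc m - m') = ((c - 1) div 2) div 2^(m - m')"
      using mm by (simp add: Suc_diff_le div_mult2_eq)
    thus ?thesis using cdiv child.IH mm by simp
  qed
  ultimately show ?case by simp
qed

definition dyad_node :: "nat \<Rightarrow> real \<Rightarrow> nat \<times> nat" where
  "dyad_node m t = (m, nat \<lfloor>2^m * t\<rfloor> + 1)"

lemma mem_dyad_node: "t \<ge> 0 \<Longrightarrow> t \<in> dyad (dyad_node m t)"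
  unfolding dyad_node_def by (subst mem_dyad_iff_floor) auto

lemma dyad_node_eq:
  assumes j: "j \<ge> 1" and t: "t \<in> dyad (m, j)"
  shows "dyad_node m t = (m, j)"
proof -
  have "\<lfloor>2^m * t\<rfloor> = int j - 1" using mem_dyad_iff_floor[OF j] t by simp
  thus ?thesis using j by (simp add: dyad_node_def)
qed

lemma in_tree_dyad_node:
  assumes t: "t \<ge> 0" and t1: "t < 1" and h: "\<forall>m'<m. 2 \<le> card (T \<inter> dyad (dyad_node m' t))"
  shows "in_tree T (dyad_node m t)"
  using h
proof (induction m)
  case 0
  have "\<lfloor>t\<rfloor> = 0" using t t1 by (simp add: floor_eq_iff)
  hence "dyad_node 0 t = (0, 1)" by (simp add: dyad_node_def)
  thus ?case using in_tree.root[of T] by simp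
next
  case (Suc m)
  have IH: "in_tree T (dyad_node m t)" using Suc by simp
  have c2: "2 \<le> card (T \<inter> dyad (dyad_node m t))" using Suc.prems by simp
  have fl: "\<lfloor>2^m * t\<rfloor> = \<lfloor>2^Suc m * t\<rfloor> div 2" using floor_pow2_mult_div[of m "Suc m" t] by simp
  have nn: "\<lfloor>2^Suc m * t\<rfloor> \<ge> 0" using t by simp
  define n where "n = nat \<lfloor>2^Suc m * t\<rfloor>"
  have "nat \<lfloor>2^m * t\<rfloor> = n div 2" unfolding n_def fl using nn by (simp add: nat_div_distrib)
  hence "n + 1 \<in> {2 * (nat \<lfloor>2^m * t\<rfloor> + 1) - 1, 2 * (nat \<lfloor>2^m * t\<rfloor> + 1)}" by auto
  from in_tree.child[OF IH[unfolded dyad_node_def] c2[unfolded dyad_node_def] this]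
  show ?case unfolding dyad_node_def n_def by simp
qed

lemma dyad_diameter_less:
  assumes "x \<in> dyad (m, j)" "y \<in> dyad (m, j)" shows "\<bar>x - y\<bar> < 1 / 2^m"
proof -
  have p: "(0::real) < 2^m" by simp
  have "real j - 1 \<le> 2^m * x" "2^m * x < real j" "real j - 1 \<le> 2^m * y" "2^m * y < real j"
    using assms p unfolding dyad_def by (simp_all add: divide_le_eq less_divide_eq mult.commute)
  hence "\<bar>2^m * x - 2^m * y\<bar> < 1" by linarith
  hence "2^m * \<bar>x - y\<bar> < 1" by (simp add: abs_mult flip: right_diff_distrib)
  thus ?thesis using p by (simp add: less_divide_eq mult.commute)
qed

lemma one_point_leaves_eq_of_le:
  assumes A: "(m1, j1) \<in> one_point_leaves T" and B: "(m2, j2) \<in> one_point_leaves T"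
    and x: "x \<in> dyad (m1, j1)" "x \<in> dyad (m2, j2)" and mm: "m1 \<le> m2"
  shows "(m1, j1) = (m2, j2)"
proof -
  have tA: "in_tree T (m1, j1)" "card (T \<inter> dyad (m1, j1)) = 1" using A by (auto simp: one_point_leaves_def)
  have tB: "in_tree T (m2, j2)" "card (T \<inter> dyad (m2, j2)) = 1" using B by (auto simp: one_point_leaves_def)
  have j1: "j1 \<ge> 1" using in_tree_ancestors[OF tA(1)] by simp
  have j2: "j2 \<ge> 1" using in_tree_ancestors[OF tB(1)] by simp
  have xa: "x \<in> dyad (m1, (j2 - 1) div 2^(m2 - m1) + 1)" by (rule mem_dyad_ancestor[OF j2 x(2) mm])
  have "\<lfloor>2^m1 * x\<rfloor> = int j1 - 1" using mem_dyad_iff_floor[OF j1] x(1) by simp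
  moreover have "\<lfloor>2^m1 * x\<rfloor> = int ((j2 - 1) div 2^(m2 - m1) + 1) - 1" using mem_dyad_iff_floor[of "(j2 - 1) div 2^(m2 - m1) + 1"] xa by simp
  ultimately have jj: "j1 = (j2 - 1) div 2^(m2 - m1) + 1" by simp
  show ?thesis
  proof (cases "m1 = m2")
    case True thus ?thesis using jj j2 by simp
  next
    case False
    hence "m1 < m2" using mm by simp
    hence "2 \<le> card (T \<inter> dyad (m1, (j2 - 1) div 2^(m2 - m1) + 1))" using in_tree_ancestors[OF tB(1)] by simp
    thus ?thesis using jj tA(2) by simp
  qed
qed

lemma one_point_leaves_eq:
  assumes A: "I \<in> one_point_leaves T" and B: "J \<in> one_point_leaves T"
    and x: "x \<in> dyad I" "x \<in> dyad J"
  shows "I = J"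
proof -
  obtain m1 j1 m2 j2 where I: "I = (m1, j1)" and J: "J = (m2, j2)" by (cases I, cases J) auto
  show ?thesis
  proof (cases "m1 \<le> m2")
    case True thus ?thesis using one_point_leaves_eq_of_le[of m1 j1 T m2 j2 x] A B x I J by simp
  next
    case False thus ?thesis using one_point_leaves_eq_of_le[of m2 j2 T m1 j1 x] A B x I J by simp
  qed
qed

lemma one_point_leaf_eq_dyad_node:
  assumes A: "mj \<in> one_point_leaves T"
  shows "\<exists>t. T \<inter> dyad mj = {t} \<and> mj = dyad_node (fst mj) t"
proof -
  obtain m j where mj: "mj = (m, j)" by (cases mj)
  have tA: "in_tree T (m, j)" "card (T \<inter> dyad (m, j)) = 1" using A mj by (auto simp: one_point_leaves_def)
  have j: "j \<ge> 1" using in_tree_ancestors[OF tA(1)] by simp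
  obtain t where t: "T \<inter> dyad (m, j) = {t}" using tA(2) by (auto simp: card_1_singleton_iff)
  hence "dyad_node m t = (m, j)" using j by (intro dyad_node_eq) auto
  thus ?thesis using t mj by auto
qed

lemma exists_isolating_level:
  assumes T: "finite T" and tT: "t \<in> T" and t0: "t \<ge> 0"
  shows "\<exists>m. card (T \<inter> dyad (dyad_node m t)) \<le> 1"
proof (cases "T - {t} = {}")
  case True
  hence "T \<inter> dyad (dyad_node 0 t) \<subseteq> {t}" by auto
  hence "card (T \<inter> dyad (dyad_node 0 t)) \<le> card {t}" by (intro card_mono) auto
  thus ?thesis by auto
next
  case False
  define \<delta> where "\<delta> = Min ((\<lambda>t'. \<bar>t' - t\<bar>) ` (T - {t}))"
  have dpos: "\<delta> > 0" unfolding \<delta>_def using T False by (subst Min_gr_iff) auto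
  have dle: "\<delta> \<le> \<bar>t' - t\<bar>" if "t' \<in> T - {t}" for t' unfolding \<delta>_def using T that by (intro Min_le) auto
  obtain m where m: "(1/2::real)^m < \<delta>" using real_arch_pow_inv[OF dpos, of "1/2"] by auto
  have "T \<inter> dyad (dyad_node m t) \<subseteq> {t}"
  proof
    fix t' assume t': "t' \<in> T \<inter> dyad (dyad_node m t)"
    have w: "\<bar>t' - t\<bar> < 1 / 2^m" using dyad_diameter_less[of t' m "snd (dyad_node m t)" t] t' mem_dyad_node[OF t0, of m]
      by (simp add: dyad_node_def)
    show "t' \<in> {t}"
    proof (rule ccontr)
      assume "t' \<notin> {t}"
      hence "\<delta> \<le> \<bar>t' - t\<bar>" using t' by (intro dle) auto
      thus False using w m by (simp add: power_divide)
    qed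
  qed
  hence "card (T \<inter> dyad (dyad_node m t)) \<le> card {t}" by (intro card_mono) auto
  thus ?thesis by auto
qed

definition isolation_level :: "real set \<Rightarrow> real \<Rightarrow> nat" where
  "isolation_level T t = (LEAST m. card (T \<inter> dyad (dyad_node m t)) \<le> 1)"

definition leaf_of :: "real set \<Rightarrow> real \<Rightarrow> nat \<times> nat" where
  "leaf_of T t = dyad_node (isolation_level T t) t"

lemma leaf_of_in_one_point_leaves:
  assumes T: "finite T" and T01: "T \<subseteq> {0..<1}" and tT: "t \<in> T"
  shows "leaf_of T t \<in> one_point_leaves T" and "card (T \<inter> dyad (leaf_of T t)) = 1"
proof -
  have t0: "t \<ge> 0" "t < 1" using tT T01 by auto
  have le1: "card (T \<inter> dyad (leaf_of T t)) \<le> 1"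
    unfolding leaf_of_def isolation_level_def
    by (rule LeastI_ex) (rule exists_isolating_level[OF T tT t0(1)])
  have "\<forall>m'<isolation_level T t. 2 \<le> card (T \<inter> dyad (dyad_node m' t))"
  proof (intro allI impI)
    fix m' assume "m' < isolation_level T t"
    hence "\<not> card (T \<inter> dyad (dyad_node m' t)) \<le> 1" unfolding isolation_level_def by (rule not_less_Least)
    thus "2 \<le> card (T \<inter> dyad (dyad_node m' t))" by simp
  qed
  hence tree: "in_tree T (leaf_of T t)" unfolding leaf_of_def by (rule in_tree_dyad_node[OF t0])
  have "t \<in> T \<inter> dyad (leaf_of T t)" using tT mem_dyad_node[OF t0(1)] by (simp add: leaf_of_def)
  hence "card (T \<inter> dyad (leaf_of T t)) \<noteq> 0" using T by auto
  thus "card (T \<inter> dyad (leaf_of T t)) = 1" using le1 by simp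
  thus "leaf_of T t \<in> one_point_leaves T" using tree by (simp add: one_point_leaves_def)
qed

lemma one_point_leaf_eq_leaf_of:
  assumes T: "finite T" and T01: "T \<subseteq> {0..<1}" and leaf: "mj \<in> one_point_leaves T"
  obtains t where "t \<in> T" "mj = leaf_of T t"
proof -
  obtain t where t: "T \<inter> dyad mj = {t}" "mj = dyad_node (fst mj) t"
    using one_point_leaf_eq_dyad_node[OF leaf] by blast
  obtain m j where mj: "mj = (m, j)" by (cases mj)
  have tT: "t \<in> T" and tD: "t \<in> dyad (m, j)" using t mj by auto
  have tree: "in_tree T (m, j)" "card (T \<inter> dyad (m, j)) = 1"
    using leaf mj by (auto simp: one_point_leaves_def)
  have j: "j \<ge> 1" using in_tree_ancestors[OF tree(1)] by simp
  have node: "dyad_node m t = (m, j)" by (rule dyad_node_eq[OF j tD])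
  have "isolation_level T t \<le> m" unfolding isolation_level_def using tree(2) node by (intro Least_le) simp
  moreover have "\<not> isolation_level T t < m"
  proof
    assume lt: "isolation_level T t < m"
    define j' where "j' = (j - 1) div 2^(m - isolation_level T t) + 1"
    have "2 \<le> card (T \<inter> dyad (isolation_level T t, j'))"
      using in_tree_ancestors[OF tree(1)] lt by (simp add: j'_def)
    moreover have "t \<in> dyad (isolation_level T t, j')"
      using mem_dyad_ancestor[OF j tD] lt by (simp add: j'_def)
    hence "leaf_of T t = (isolation_level T t, j')"
      unfolding leaf_of_def by (intro dyad_node_eq) (auto simp: j'_def)
    ultimately show False using leaf_of_in_one_point_leaves(2)[OF T T01 tT] by simp
  qed
  ultimately have "mj = leaf_of T t" using node mj by (simp add: leaf_of_def)
  with tT show thesis by (rule that)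
qed

lemma bij_betw_one_point_leaves:
  assumes T: "finite T" and T01: "T \<subseteq> {0..<1}"
  shows "bij_betw (leaf_of T) T (one_point_leaves T)"
  unfolding bij_betw_def
proof (intro conjI inj_onI equalityI subsetI)
  fix t t' assume t: "t \<in> T" and t': "t' \<in> T" and eq: "leaf_of T t = leaf_of T t'"
  have "0 \<le> t" "0 \<le> t'" using t t' T01 by auto
  hence "t \<in> dyad (leaf_of T t)" "t' \<in> dyad (leaf_of T t')" by (simp_all add: leaf_of_def mem_dyad_node)
  hence "t \<in> T \<inter> dyad (leaf_of T t)" "t' \<in> T \<inter> dyad (leaf_of T t)" using t t' eq by simp_all
  moreover obtain x where "T \<inter> dyad (leaf_of T t) = {x}"
    using leaf_of_in_one_point_leaves(2)[OF T T01 t] by (auto simp: card_1_singleton_iff)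
  ultimately show "t = t'" by (metis singletonD)
next
  fix mj assume "mj \<in> leaf_of T ` T"
  thus "mj \<in> one_point_leaves T" using leaf_of_in_one_point_leaves(1)[OF T T01] by auto
next
  fix mj assume "mj \<in> one_point_leaves T"
  then obtain t where "t \<in> T" "mj = leaf_of T t" by (rule one_point_leaf_eq_leaf_of[OF T T01])
  thus "mj \<in> leaf_of T ` T" by simp
qed

lemma ex1_sorted_list_by_key:
  fixes f :: "'a \<Rightarrow> 'b::linorder"
  assumes S: "finite S" and inj: "inj_on f S"
  shows "\<exists>!xs. distinct xs \<and> set xs = S \<and> sorted_wrt (\<lambda>x y. f x < f y) xs"
proof -
  obtain ys where ys: "sorted_wrt (<) ys" "set ys = f ` S"
    using ex1_sorted_list_for_set_if_finite[of "f ` S"] S by blast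
  have keys: "map f xs = ys" if "sorted_wrt (\<lambda>x y. f x < f y) xs" "set xs = S" for xs
    using that ex1_sorted_list_for_set_if_finite[of "f ` S"] S ys by (auto simp: sorted_wrt_map)
  define xs0 where "xs0 = map (the_inv_into S f) ys"
  have keys0: "map f xs0 = ys" unfolding xs0_def map_map
    using f_the_inv_into_f[OF inj] ys(2) by (intro map_idI) auto
  show ?thesis
  proof (rule ex1I[of _ xs0])
    have "set xs0 = S" unfolding xs0_def using ys(2)
      by (simp add: image_image the_inv_into_f_f[OF inj] cong: image_cong)
    moreover have "distinct xs0" using keys0 ys(1) by (metis distinct_map strict_sorted_iff)
    moreover have "sorted_wrt (\<lambda>x y. f x < f y) xs0" using keys0 ys(1) by (metis sorted_wrt_map)
    ultimately show "distinct xs0 \<and> set xs0 = S \<and> sorted_wrt (\<lambda>x y. f x < f y) xs0" by simp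
    fix xs assume xs: "distinct xs \<and> set xs = S \<and> sorted_wrt (\<lambda>x y. f x < f y) xs"
    hence "map f xs = map f xs0" using keys keys0 by simp
    moreover have "inj_on f (set xs \<union> set xs0)" using inj xs \<open>set xs0 = S\<close> by simp
    ultimately show "xs = xs0" using map_inj_on by blast
  qed
qed

lemma pi_k_spec:
  assumes ts01: "set ts \<subseteq> {0..<1}"
  shows "distinct (pi_k ts) \<and> set (pi_k ts) = one_point_leaves (set ts)
    \<and> sorted_wrt (\<lambda>I J. dyad_left I < dyad_left J) (pi_k ts)"
proof -
  define T where "T = set ts"
  have T: "finite T" and T01: "T \<subseteq> {0..<1}" using ts01 by (auto simp: T_def)
  have "finite (one_point_leaves T)"
    using bij_betw_one_point_leaves[OF T T01] T bij_betw_finite by blast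
  moreover have "inj_on dyad_left (one_point_leaves T)"
    using one_point_leaves_eq dyad_left_mem by (metis inj_onI)
  ultimately show ?thesis
    unfolding pi_k_def T_def[symmetric] by (rule theI'[OF ex1_sorted_list_by_key])
qed

lemma one_point_leaf_subset_unit:
  assumes T01: "T \<subseteq> {0..<1}" and I: "I \<in> one_point_leaves T"
  shows "dyad I \<subseteq> {0..<1}"
proof -
  obtain t where t: "T \<inter> dyad I = {t}" "I = dyad_node (fst I) t" using one_point_leaf_eq_dyad_node[OF I] by blast
  define m where "m = fst I"
  have t01: "0 \<le> t" "t < 1" using t T01 by auto
  define n where "n = \<lfloor>2^m * t\<rfloor>"
  have n0: "n \<ge> 0" using t01 unfolding n_def by simp
  have "real_of_int n \<le> 2^m * t" unfolding n_def by simp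
  also have "\<dots> < 2^m" using t01 by simp
  finally have "real_of_int n < real_of_int (2^m)" by simp
  hence "n < 2^m" by (simp only: of_int_less_iff)
  hence "n + 1 \<le> 2^m" by simp
  hence "real_of_int (n + 1) \<le> real_of_int (2^m)" by (simp only: of_int_le_iff)
  hence n1: "real_of_int n + 1 \<le> 2^m" by simp
  have I2: "I = (m, nat n + 1)" using t unfolding dyad_node_def m_def n_def by simp
  have "real (nat n + 1) - 1 = real_of_int n" using n0 by simp
  moreover have "real (nat n + 1) = real_of_int n + 1" using n0 by simp
  ultimately have DI: "dyad I = {real_of_int n / 2^m ..< (real_of_int n + 1) / 2^m}" unfolding I2 dyad_def by (simp add: add.commute)
  have p: "(0::real) < 2^m" by simp
  show ?thesis
  proof
    fix x assume "x \<in> dyad I"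
    hence x: "real_of_int n / 2^m \<le> x" "x < (real_of_int n + 1) / 2^m" using DI by auto
    have "0 \<le> real_of_int n / 2^m" using n0 p by simp
    moreover have "(real_of_int n + 1) / 2^m \<le> 1" using n1 p by simp
    ultimately show "x \<in> {0..<1}" using x by (simp only: atLeastLessThan_iff) linarith
  qed
qed

lemma im_piD:
  assumes "Is \<in> im_pi k"
  shows "length Is = k" "\<And>i. i < k \<Longrightarrow> dyad (Is ! i) \<subseteq> {0..<1}"
    "\<And>i i' x y. i < i' \<Longrightarrow> i' < k \<Longrightarrow> x \<in> dyad (Is ! i) \<Longrightarrow> y \<in> dyad (Is ! i') \<Longrightarrow> x < y"
proof -
  obtain ts where ts: "Is = pi_k ts" "length ts = k" "distinct ts" "set ts \<subseteq> {0..<1}"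
    using assms unfolding im_pi_def by blast
  define T where "T = set ts"
  have T: "finite T" and T01: "T \<subseteq> {0..<1}" using ts by (auto simp: T_def)
  have P: "distinct Is" "set Is = one_point_leaves T" "sorted_wrt (\<lambda>I J. dyad_left I < dyad_left J) Is"
    using pi_k_spec[OF ts(4)] ts(1) by (auto simp: T_def)
  have "card (one_point_leaves T) = card T" using bij_betw_same_card[OF bij_betw_one_point_leaves[OF T T01]] by simp
  also have "card T = k" using ts distinct_card by (auto simp: T_def)
  finally show len: "length Is = k" using P distinct_card by metis
  have mem: "i < k \<Longrightarrow> Is ! i \<in> one_point_leaves T" for i using P(2) len by (metis nth_mem)
  show "\<And>i. i < k \<Longrightarrow> dyad (Is ! i) \<subseteq> {0..<1}" using one_point_leaf_subset_unit[OF T01] mem by blast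
  fix i i' x y assume ii: "i < i'" "i' < k" and x: "x \<in> dyad (Is ! i)" and y: "y \<in> dyad (Is ! i')"
  have lt: "dyad_left (Is ! i) < dyad_left (Is ! i')" using sorted_wrt_nth_less[OF P(3) ii(1)] ii len by simp
  have ne: "Is ! i \<noteq> Is ! i'" using P(1) ii len by (simp add: nth_eq_iff_index_eq)
  show "x < y"
  proof (rule ccontr)
    assume "\<not> x < y"
    have "dyad_left (Is ! i') \<in> dyad (Is ! i')" by (rule dyad_left_mem)
    moreover have "dyad_left (Is ! i') \<in> dyad (Is ! i)"
      using x y lt \<open>\<not> x < y\<close> unfolding dyad_eq_interval by auto
    ultimately have "Is ! i = Is ! i'" using one_point_leaves_eq[OF mem[of i] mem[of i'], of "dyad_left (Is ! i')"] ii by simp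
    thus False using ne by simp
  qed
qed




section \<open>The process X\<close>

lemma Dset_if_finite_jumps:
  fixes f :: "real \<Rightarrow> 'e" and V :: "real set"
  assumes f: "f \<in> extensional {0..<1}" and V: "finite V" "V \<subseteq> {0<..<1}"
    and const: "\<And>s t. 0 \<le> s \<Longrightarrow> s \<le> t \<Longrightarrow> t < 1 \<Longrightarrow> {s<..t} \<inter> V = {} \<Longrightarrow> f t = f s"
  shows "f \<in> Dset"
proof -
  define xs where "xs = sorted_list_of_set V"
  have xs: "sorted_wrt (<) xs" "set xs = V" using V(1) by (simp_all add: xs_def)
  define n where "n = Suc (length xs)"
  define s where "s i = ((0::real) # xs @ [1]) ! i" for i
  have sorted: "sorted_wrt (<) (0 # xs @ [1])" using xs V(2) by (auto simp: sorted_wrt_append)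
  have smono: "s i < s j" if "i < j" "j \<le> n" for i j
    unfolding s_def using sorted_wrt_nth_less[OF sorted that(1)] that by (simp add: n_def)
  have smono_iff: "i < j" if "s i < s j" "i \<le> n" "j \<le> n" for i j
    using smono[of j i] that by (cases "i < j") (auto simp: not_less le_less)
  have s0: "s 0 = 0" and sn: "s n = 1" by (simp_all add: s_def n_def nth_append)
  have s_Suc: "s (Suc q) = xs ! q" if "q < length xs" for q
    using that by (simp add: s_def nth_append)
  have "\<forall>i<n. \<forall>t\<in>{s i..<s (Suc i)}. f t = f (s i)"
  proof (intro allI impI ballI)
    fix i t assume i: "i < n" and t: "t \<in> {s i..<s (Suc i)}"
    have si0: "0 \<le> s i" using s0 smono[of 0 i] i by (cases "i = 0") auto
    have t1: "t < 1" using t sn smono[of "Suc i" n] i by (cases "Suc i = n") auto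
    have "{s i<..t} \<inter> V = {}"
    proof (rule ccontr)
      assume "{s i<..t} \<inter> V \<noteq> {}"
      then obtain q where q: "q < length xs" "s i < s (Suc q)" "s (Suc q) \<le> t"
        using xs(2) s_Suc by (auto simp: in_set_conv_nth)
      have "i < Suc q" "Suc q < Suc i"
        using smono_iff[of i "Suc q"] smono_iff[of "Suc q" "Suc i"] q t i by (auto simp: n_def)
      thus False by simp
    qed
    thus "f t = f (s i)" using const[of "s i" t] si0 t t1 by simp
  qed
  moreover have "\<forall>j<n. s j < s (Suc j)" using smono by simp
  ultimately show ?thesis unfolding Dset_def using f s0 sn by blast
qed

lemma counting_path_in_Dset:
  fixes y :: "nat \<Rightarrow> real"
  assumes A: "finite A"
  shows "restrict (\<lambda>t. a (card {j \<in> A. y j \<le> t})) {0..<1} \<in> Dset"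
proof (rule Dset_if_finite_jumps)
  show "finite (y ` A \<inter> {0<..<1})" using A by simp
  fix s t :: real assume st: "0 \<le> s" "s \<le> t" "t < 1" and "{s<..t} \<inter> (y ` A \<inter> {0<..<1}) = {}"
  hence "{j \<in> A. y j \<le> t} = {j \<in> A. y j \<le> s}" by force
  thus "restrict (\<lambda>t. a (card {j \<in> A. y j \<le> t})) {0..<1} t
      = restrict (\<lambda>t. a (card {j \<in> A. y j \<le> t})) {0..<1} s" using st by simp
qed auto

lemma measurable_Xproc_eval:
  fixes Y :: "nat \<Rightarrow> 'w \<Rightarrow> real" and t :: real
  assumes Y: "\<And>j. j \<in> {1..k} \<Longrightarrow> Y j \<in> borel_measurable M"
  shows "(\<lambda>\<omega>. a (card {j \<in> {1..k}. Y j \<omega> \<le> t})) \<in> borel_measurable M"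
proof -
  have "(\<lambda>\<omega>. (\<Sum>j\<in>{1..k}. if Y j \<omega> \<le> t then 1 else 0::real)) \<in> borel_measurable M"
    using Y by (intro borel_measurable_sum) measurable
  hence count: "(\<lambda>\<omega>. nat \<lfloor>\<Sum>j\<in>{1..k}. if Y j \<omega> \<le> t then 1 else 0::real\<rfloor>) \<in> measurable M (count_space UNIV)"
    by measurable
  have "card {j \<in> {1..k}. Y j \<omega> \<le> t} = nat \<lfloor>\<Sum>j\<in>{1..k}. if Y j \<omega> \<le> t then 1 else 0::real\<rfloor>" for \<omega>
    by (simp add: sum.If_cases Int_def)
  thus ?thesis by (simp only:) (rule measurable_compose_countable'[OF _ count], auto)
qed

lemma Xproc_in_Dset: "Xproc k a Y \<omega> \<in> Dset"
  unfolding Xproc_def by (rule counting_path_in_Dset) simp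

lemma measurable_Xproc:
  fixes Y :: "nat \<Rightarrow> 'w \<Rightarrow> real"
  assumes Y: "\<And>j. j \<in> {1..k} \<Longrightarrow> Y j \<in> borel_measurable M"
  shows "Xproc k a Y \<in> measurable M (Dmeas :: (real \<Rightarrow> 'e::metric_space) measure)"
  unfolding Dmeas_def
proof (rule measurable_restrict_space2)
  show "Xproc k a Y \<in> space M \<rightarrow> Dset" by (intro Pi_I Xproc_in_Dset)
  show "Xproc k a Y \<in> measurable M (Pi\<^sub>M {0..<1} (\<lambda>_. (borel :: 'e measure)))"
    unfolding Xproc_def by (intro measurable_restrict measurable_Xproc_eval[OF Y])
qed


section \<open>Exponential moments of the state distortion\<close>

text \<open>One-dimensional Helly: the intervals [y - F y / e, y + F y / e] intersect pairwise, so the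
  supremum of their left endpoints lies in all of them.\<close>

lemma exists_center_of_pairwise_bound:
  fixes F :: "real \<Rightarrow> ennreal" and e :: real
  assumes e: "e > 0" and pw: "\<And>y y'. y \<in> J \<Longrightarrow> y' \<in> J \<Longrightarrow> ennreal (e * \<bar>y - y'\<bar>) \<le> F y + F y'"
  shows "\<exists>m. \<forall>y\<in>J. ennreal (e * \<bar>y - m\<bar>) \<le> F y"
proof (cases "\<exists>y0\<in>J. F y0 \<noteq> \<infinity>")
  case False thus ?thesis by auto
next
  case True
  then obtain y0 where y0: "y0 \<in> J" "F y0 \<noteq> \<infinity>" by blast
  define S where "S = {y\<in>J. F y \<noteq> \<infinity>}"
  define f where "f y = enn2real (F y)" for y
  have Ff: "y \<in> S \<Longrightarrow> F y = ennreal (f y)" for y unfolding S_def f_def by (cases "F y") auto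
  have f0: "f y \<ge> 0" for y unfolding f_def by simp
  have pwr: "e * \<bar>y - y'\<bar> \<le> f y + f y'" if "y \<in> S" "y' \<in> S" for y y'
  proof -
    have "ennreal (e * \<bar>y - y'\<bar>) \<le> ennreal (f y + f y')"
      using pw[of y y'] that Ff[of y] Ff[of y'] f0 by (auto simp: S_def)
    thus ?thesis using f0[of y] f0[of y'] by (subst (asm) ennreal_le_iff) auto
  qed
  define A where "A = (\<lambda>y. y - f y / e) ` S"
  have y0S: "y0 \<in> S" using y0 by (simp add: S_def)
  have ub: "y' - f y' / e \<le> y + f y / e" if "y \<in> S" "y' \<in> S" for y y'
  proof -
    have "e * \<bar>y - y'\<bar> \<le> f y + f y'" by (rule pwr[OF that])
    hence "e * (y' - y) \<le> f y + f y'" using e by (smt (verit) mult_left_mono abs_ge_self mult.commute)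
    hence "y' - y \<le> (f y + f y') / e" using e by (simp add: le_divide_eq mult.commute)
    thus ?thesis by (simp add: add_divide_distrib)
  qed
  have bdd: "bdd_above A" unfolding A_def bdd_above_def using ub[OF y0S] by blast
  have ne: "A \<noteq> {}" using y0S by (auto simp: A_def)
  define m where "m = Sup A"
  show ?thesis
  proof (intro exI ballI)
    fix y assume yJ: "y \<in> J"
    show "ennreal (e * \<bar>y - m\<bar>) \<le> F y"
    proof (cases "y \<in> S")
      case False thus ?thesis using yJ by (auto simp: S_def)
    next
      case True
      have "y - f y / e \<le> m" unfolding m_def using True bdd by (intro cSup_upper) (auto simp: A_def)
      moreover have "m \<le> y + f y / e" unfolding m_def using ne ub[OF True] by (intro cSup_least) (auto simp: A_def)
      ultimately have "\<bar>y - m\<bar> \<le> f y / e" by linarith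
      hence "e * \<bar>y - m\<bar> \<le> f y" using e by (simp add: le_divide_eq mult.commute)
      thus ?thesis using Ff[OF True] by (simp add: ennreal_leI)
    qed
  qed
qed

lemma nn_integral_exponential_density: "c > 0 \<Longrightarrow> (\<integral>\<^sup>+x. ennreal (exponential_density c x) \<partial>lborel) = 1"
proof -
  assume c: "c > 0"
  interpret prob_space "density lborel (exponential_density c)" by (rule prob_space_exponential_density[OF c])
  have "emeasure (density lborel (exponential_density c)) UNIV = 1" using emeasure_space_1 by simp
  thus ?thesis by (simp add: emeasure_density)
qed

lemma nn_integral_exp_neg_abs_le:
  fixes c m :: real assumes c: "c > 0"
  shows "(\<integral>\<^sup>+y. ennreal (exp (- c * \<bar>y - m\<bar>)) \<partial>lborel) \<le> ennreal (2 / c)"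
proof -
  have m1: "(\<integral>\<^sup>+x. ennreal (exponential_density c (x - m)) \<partial>lborel) = 1"
    using nn_integral_real_affine[of "\<lambda>x. ennreal (exponential_density c x)" 1 "- m"] nn_integral_exponential_density[OF c] by simp
  have m2: "(\<integral>\<^sup>+x. ennreal (exponential_density c (m - x)) \<partial>lborel) = 1"
    using nn_integral_real_affine[of "\<lambda>x. ennreal (exponential_density c x)" "-1" m] nn_integral_exponential_density[OF c] by simp
  have "(\<integral>\<^sup>+y. ennreal (exp (- c * \<bar>y - m\<bar>)) \<partial>lborel)
     \<le> (\<integral>\<^sup>+y. ennreal (1/c) * (ennreal (exponential_density c (y - m)) + ennreal (exponential_density c (m - y))) \<partial>lborel)"
  proof (rule nn_integral_mono)
    fix y
    have "exp (- c * \<bar>y - m\<bar>) \<le> (1/c) * (exponential_density c (y - m) + exponential_density c (m - y))"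
      using c by (auto simp: exponential_density_def field_simps abs_if)
    also have "\<dots> \<ge> 0" using c by (auto simp: exponential_density_def)
    ultimately show "ennreal (exp (- c * \<bar>y - m\<bar>)) \<le> ennreal (1/c) * (ennreal (exponential_density c (y - m)) + ennreal (exponential_density c (m - y)))"
      using c by (simp add: ennreal_mult[symmetric] ennreal_plus[symmetric] exponential_density_nonneg ennreal_leI del: ennreal_plus)
  qed
  also have "\<dots> = ennreal (1/c) * 2"
    by (simp add: nn_integral_cmult nn_integral_add m1 m2)
  also have "\<dots> = ennreal (2/c)" using c by (simp add: ennreal_mult[symmetric] ennreal_numeral[symmetric] del: ennreal_numeral)
  finally show ?thesis .
qed

lemma nn_integral_uniform_exp_neg_abs_le:
  fixes M :: "'w measure" and Y :: "'w \<Rightarrow> real"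
  assumes Y: "Y \<in> borel_measurable M" and uniform: "distr M lborel Y = uniform_measure lborel A"
    and A: "A \<in> sets borel" "emeasure lborel A = ennreal L" "L > 0" and c: "c > 0"
  shows "(\<integral>\<^sup>+\<omega>. ennreal (exp (- c * \<bar>Y \<omega> - m\<bar>)) \<partial>M) \<le> ennreal (2 / (c * L))"
proof -
  have h: "(\<lambda>y. ennreal (exp (- c * \<bar>y - m\<bar>))) \<in> borel_measurable (lborel :: real measure)"
    by measurable
  have "(\<integral>\<^sup>+\<omega>. ennreal (exp (- c * \<bar>Y \<omega> - m\<bar>)) \<partial>M)
      = (\<integral>\<^sup>+y. ennreal (exp (- c * \<bar>y - m\<bar>)) \<partial>uniform_measure lborel A)"
    using Y h by (simp add: nn_integral_distr flip: uniform)
  also have "\<dots> = (\<integral>\<^sup>+y. ennreal (exp (- c * \<bar>y - m\<bar>)) * indicator A y \<partial>lborel) / ennreal L"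
    using nn_integral_uniform_measure[OF h, of A] A(1,2) by simp
  also have "\<dots> \<le> ennreal (2 / c) / ennreal L"
  proof (rule divide_right_mono_ennreal)
    have "(\<integral>\<^sup>+y. ennreal (exp (- c * \<bar>y - m\<bar>)) * indicator A y \<partial>lborel)
        \<le> (\<integral>\<^sup>+y. ennreal (exp (- c * \<bar>y - m\<bar>)) \<partial>lborel)"
      by (intro nn_integral_mono) (auto simp: indicator_def)
    also have "\<dots> \<le> ennreal (2 / c)" by (rule nn_integral_exp_neg_abs_le[OF c])
    finally show "(\<integral>\<^sup>+y. ennreal (exp (- c * \<bar>y - m\<bar>)) * indicator A y \<partial>lborel) \<le> ennreal (2 / c)" .
  qed
  also have "\<dots> = ennreal (2 / (c * L))"
    using A c by (simp add: divide_ennreal field_simps)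
  finally show ?thesis .
qed

lemma prod_mono_ennreal:
  fixes f g :: "'i \<Rightarrow> ennreal"
  shows "(\<And>i. i \<in> A \<Longrightarrow> f i \<le> g i) \<Longrightarrow> prod f A \<le> prod g A"
proof (induction A rule: infinite_finite_induct)
  case (insert x F)
  thus ?case by (simp add: mult_mono)
qed simp_all

lemma card_points_le_in_interval:
  fixes y :: "nat \<Rightarrow> real" and Jf :: "nat \<Rightarrow> real set"
  assumes ord: "\<And>i i' x z. i \<in> {1..k} \<Longrightarrow> i' \<in> {1..k} \<Longrightarrow> i < i' \<Longrightarrow> x \<in> Jf i \<Longrightarrow> z \<in> Jf i' \<Longrightarrow> x < z"
    and yJ: "\<And>j. j \<in> {1..k} \<Longrightarrow> y j \<in> Jf j"
    and i: "i \<in> {1..k}" and t: "t \<in> Jf i"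
  shows "card {j \<in> {1..k}. y j \<le> t} = (if y i \<le> t then i else i - 1)"
proof -
  have "{j \<in> {1..k}. y j \<le> t} = {1..<i} \<union> (if y i \<le> t then {i} else {})"
  proof (intro equalityI subsetI)
    fix j assume j: "j \<in> {j \<in> {1..k}. y j \<le> t}"
    show "j \<in> {1..<i} \<union> (if y i \<le> t then {i} else {})"
    proof (cases "j < i")
      case True thus ?thesis using j by auto
    next
      case False
      show ?thesis
      proof (cases "j = i")
        case True thus ?thesis using j by auto
      next
        case False
        hence "i < j" using \<open>\<not> j < i\<close> by simp
        hence "t < y j" using ord[OF i _ _ t yJ, of j] j by auto
        thus ?thesis using j by auto
      qed
    qed
  next
    fix j assume j: "j \<in> {1..<i} \<union> (if y i \<le> t then {i} else {})"
    show "j \<in> {j \<in> {1..k}. y j \<le> t}"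
    proof (cases "j < i")
      case True
      hence jk: "j \<in> {1..k}" using j i by (auto split: if_splits)
      have "y j < t" using ord[OF jk i True yJ[OF jk] t] .
      thus ?thesis using jk by simp
    next
      case False thus ?thesis using j i by (auto split: if_splits)
    qed
  qed
  moreover have "card ({1..<i} \<union> (if y i \<le> t then {i} else {})) = (if y i \<le> t then i else i - 1)"
    using i by (auto simp: card_insert_if)
  ultimately show ?thesis by simp
qed

definition jump_distortion ::
    "(nat \<Rightarrow> 'e::metric_space) \<Rightarrow> (real \<Rightarrow> 'e) \<Rightarrow> real set \<Rightarrow> nat \<Rightarrow> real \<Rightarrow> ennreal" where
  "jump_distortion a g J i y =
     (\<integral>\<^sup>+ t. indicator J t * ennreal (dist (a (if y \<le> t then i else i - 1)) (g (unit_clamp t))) \<partial>lborel)"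

lemma measurable_jump_distortion_integrand:
  fixes g :: "real \<Rightarrow> 'e::metric_space"
  assumes g: "g \<in> Dset" and J: "J \<in> sets borel"
  shows "(\<lambda>t. indicator J t * ennreal (dist (a (if y \<le> t then i else i - 1)) (g (unit_clamp t)))) \<in> borel_measurable (lborel :: real measure)"
proof -
  note d = measurable_dist_Dset_path[OF g]
  have e: "indicator J t * ennreal (dist (a (if y \<le> t then i else i - 1)) (g (unit_clamp t)))
      = indicator J t * (indicator {y..} t * ennreal (dist (a i) (g (unit_clamp t))) + indicator {..<y} t * ennreal (dist (a (i - 1)) (g (unit_clamp t))))" for t
    by (auto simp: indicator_def)
  have "(\<lambda>t. indicator J t * (indicator {y..} t * ennreal (dist (a i) (g (unit_clamp t))) + indicator {..<y} t * ennreal (dist (a (i - 1)) (g (unit_clamp t))))) \<in> borel_measurable (lborel :: real measure)"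
    using d J by measurable
  thus ?thesis unfolding e .
qed

lemma jump_integrands_le_state_integrand:
  fixes Y :: "nat \<Rightarrow> 'w \<Rightarrow> real" and Jf :: "nat \<Rightarrow> real set" and g :: "real \<Rightarrow> 'e::metric_space"
  assumes ord: "\<And>i i' x z. i \<in> {1..k} \<Longrightarrow> i' \<in> {1..k} \<Longrightarrow> i < i' \<Longrightarrow> x \<in> Jf i \<Longrightarrow> z \<in> Jf i' \<Longrightarrow> x < z"
    and sub: "\<And>i. i \<in> {1..k} \<Longrightarrow> Jf i \<subseteq> {0..<1}"
    and yJ: "\<And>j. j \<in> {1..k} \<Longrightarrow> Y j \<omega> \<in> Jf j"
  shows "(\<Sum>i\<in>{1..k}. indicator (Jf i) t * ennreal (dist (a (if Y i \<omega> \<le> t then i else i - 1)) (g (unit_clamp t))))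
    \<le> indicator {0..<1} t * (\<Sum>j\<in>{0..k}. indicator {a j} (Xproc k a Y \<omega> (unit_clamp t))
          * ennreal (dist (a j) (g (unit_clamp t))))"
    (is "(\<Sum>i\<in>{1..k}. ?h i) \<le> _")
proof (cases "\<exists>i0\<in>{1..k}. t \<in> Jf i0")
  case False
  hence "(\<Sum>i\<in>{1..k}. ?h i) = 0" by (intro sum.neutral) auto
  thus ?thesis by (simp only: zero_le)
next
  case True
  then obtain i0 where i0: "i0 \<in> {1..k}" "t \<in> Jf i0" by blast
  have notin: "t \<notin> Jf i" if "i \<in> {1..k}" "i \<noteq> i0" for i
    using ord[OF that(1) i0(1) _ _ i0(2)] ord[OF i0(1) that(1) _ i0(2)] that(2)
    by (cases "i < i0") (auto simp: not_less_iff_gr_or_eq)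
  have "(\<Sum>i\<in>{1..k}. ?h i) = ?h i0 + (\<Sum>i\<in>{1..k} - {i0}. ?h i)"
    using i0 by (intro sum.remove) auto
  also have "(\<Sum>i\<in>{1..k} - {i0}. ?h i) = 0"
    using notin by (intro sum.neutral) auto
  finally have "(\<Sum>i\<in>{1..k}. ?h i) = ?h i0" by simp
  define c where "c = (if Y i0 \<omega> \<le> t then i0 else i0 - 1)"
  have t01: "t \<in> {0..<1}" using sub[OF i0(1)] i0(2) by auto
  have "card {j \<in> {1..k}. Y j \<omega> \<le> t} = c"
    unfolding c_def using ord yJ i0 by (rule card_points_le_in_interval)
  hence X: "Xproc k a Y \<omega> (unit_clamp t) = a c"
    using t01 by (simp add: Xproc_def)
  have "?h i0 = indicator {a c} (Xproc k a Y \<omega> (unit_clamp t)) * ennreal (dist (a c) (g (unit_clamp t)))"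
    using i0 X by (simp add: c_def)
  also have "\<dots> \<le> (\<Sum>j\<in>{0..k}. indicator {a j} (Xproc k a Y \<omega> (unit_clamp t)) * ennreal (dist (a j) (g (unit_clamp t))))"
    using i0 by (intro member_le_sum) (auto simp: c_def)
  finally show ?thesis using \<open>(\<Sum>i\<in>{1..k}. ?h i) = ?h i0\<close> t01 by simp
qed

lemma sum_jump_distortion_le_state_distortion:
  fixes Y :: "nat \<Rightarrow> 'w \<Rightarrow> real" and Jf :: "nat \<Rightarrow> real set" and g :: "real \<Rightarrow> 'e::metric_space"
  assumes ord: "\<And>i i' x z. i \<in> {1..k} \<Longrightarrow> i' \<in> {1..k} \<Longrightarrow> i < i' \<Longrightarrow> x \<in> Jf i \<Longrightarrow> z \<in> Jf i' \<Longrightarrow> x < z"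
    and sub: "\<And>i. i \<in> {1..k} \<Longrightarrow> Jf i \<subseteq> {0..<1}"
    and Jm: "\<And>i. i \<in> {1..k} \<Longrightarrow> Jf i \<in> sets borel"
    and yJ: "\<And>j. j \<in> {1..k} \<Longrightarrow> Y j \<omega> \<in> Jf j"
    and g: "g \<in> Dset"
  shows "(\<Sum>i\<in>{1..k}. jump_distortion a g (Jf i) i (Y i \<omega>)) \<le> state_distortion k a (Xproc k a Y \<omega>) g"
proof -
  have "(\<Sum>i\<in>{1..k}. jump_distortion a g (Jf i) i (Y i \<omega>))
      = (\<integral>\<^sup>+ t. (\<Sum>i\<in>{1..k}. indicator (Jf i) t
          * ennreal (dist (a (if Y i \<omega> \<le> t then i else i - 1)) (g (unit_clamp t)))) \<partial>lborel)"
    unfolding jump_distortion_def using measurable_jump_distortion_integrand[OF g Jm]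
    by (intro nn_integral_sum[symmetric]) auto
  also have "\<dots> \<le> state_distortion k a (Xproc k a Y \<omega>) g"
    unfolding state_distortion_def
    by (intro nn_integral_mono jump_integrands_le_state_integrand[where Y=Y and \<omega>=\<omega>, OF ord sub yJ])
  finally show ?thesis .
qed

text \<open>On [y, y') the two step paths sit at a i and a (i - 1), which are e apart, so by the
  triangle inequality g is at distance at least e from one of them at every such time.\<close>

lemma jump_distortion_pair_ge:
  fixes g :: "real \<Rightarrow> 'e::metric_space"
  assumes g: "g \<in> Dset" and J: "J = {l..<u}" and eps: "dist (a i) (a (i - 1)) \<ge> e" and e: "e > 0"
    and y: "y \<in> J" "y' \<in> J" "y \<le> y'"
  shows "ennreal (e * (y' - y)) \<le> jump_distortion a g J i y + jump_distortion a g J i y'"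
proof -
  note d = measurable_dist_Dset_path[OF g]
  have sub: "t \<in> J" if "t \<in> {y..<y'}" for t using that y J by auto
  have A: "(\<integral>\<^sup>+ t. indicator {y..<y'} t * ennreal (dist (a i) (g (unit_clamp t))) \<partial>lborel) \<le> jump_distortion a g J i y"
    unfolding jump_distortion_def
  proof (rule nn_integral_mono)
    fix t show "indicator {y..<y'} t * ennreal (dist (a i) (g (unit_clamp t))) \<le> indicator J t * ennreal (dist (a (if y \<le> t then i else i - 1)) (g (unit_clamp t)))"
      using sub[of t] by (cases "t \<in> {y..<y'}") auto
  qed
  have B: "(\<integral>\<^sup>+ t. indicator {y..<y'} t * ennreal (dist (a (i - 1)) (g (unit_clamp t))) \<partial>lborel) \<le> jump_distortion a g J i y'"
    unfolding jump_distortion_def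
  proof (rule nn_integral_mono)
    fix t show "indicator {y..<y'} t * ennreal (dist (a (i - 1)) (g (unit_clamp t))) \<le> indicator J t * ennreal (dist (a (if y' \<le> t then i else i - 1)) (g (unit_clamp t)))"
      using sub[of t] by (cases "t \<in> {y..<y'}") auto
  qed
  have "ennreal (e * (y' - y)) = (\<integral>\<^sup>+ t. ennreal e * indicator {y..<y'} t \<partial>lborel)"
    using y e by (simp add: nn_integral_cmult_indicator ennreal_mult)
  also have "\<dots> \<le> (\<integral>\<^sup>+ t. indicator {y..<y'} t * ennreal (dist (a i) (g (unit_clamp t))) + indicator {y..<y'} t * ennreal (dist (a (i - 1)) (g (unit_clamp t))) \<partial>lborel)"
  proof (rule nn_integral_mono)
    fix t
    have "e \<le> dist (a i) (g (unit_clamp t)) + dist (a (i - 1)) (g (unit_clamp t))"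
      using eps dist_triangle[of "a i" "a (i - 1)" "g (unit_clamp t)"] by (simp add: dist_commute)
    hence "ennreal e \<le> ennreal (dist (a i) (g (unit_clamp t))) + ennreal (dist (a (i - 1)) (g (unit_clamp t)))"
      by (simp add: ennreal_plus[symmetric] del: ennreal_plus)
    thus "ennreal e * indicator {y..<y'} t \<le> indicator {y..<y'} t * ennreal (dist (a i) (g (unit_clamp t))) + indicator {y..<y'} t * ennreal (dist (a (i - 1)) (g (unit_clamp t)))"
      by (cases "t \<in> {y..<y'}") auto
  qed
  also have "\<dots> = (\<integral>\<^sup>+ t. indicator {y..<y'} t * ennreal (dist (a i) (g (unit_clamp t))) \<partial>lborel) + (\<integral>\<^sup>+ t. indicator {y..<y'} t * ennreal (dist (a (i - 1)) (g (unit_clamp t))) \<partial>lborel)"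
    by (intro nn_integral_add borel_measurable_times_ennreal d) simp_all
  also have "\<dots> \<le> jump_distortion a g J i y + jump_distortion a g J i y'" using A B by (rule add_mono)
  finally show ?thesis .
qed

lemma jump_distortion_center:
  fixes g :: "real \<Rightarrow> 'e::metric_space"
  assumes g: "g \<in> Dset" and J: "J = {l..<u}" and eps: "dist (a i) (a (i - 1)) \<ge> e" and e: "e > 0"
  shows "\<exists>m. \<forall>y\<in>J. ennreal (e * \<bar>y - m\<bar>) \<le> jump_distortion a g J i y"
proof (rule exists_center_of_pairwise_bound[OF e])
  fix y y' assume y: "y \<in> J" "y' \<in> J"
  show "ennreal (e * \<bar>y - y'\<bar>) \<le> jump_distortion a g J i y + jump_distortion a g J i y'"
  proof (cases "y \<le> y'")
    case True thus ?thesis using jump_distortion_pair_ge[OF g J eps e y True] by (simp add: abs_if)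
  next
    case False thus ?thesis using jump_distortion_pair_ge[OF g J eps e y(2) y(1)] by (simp add: abs_if add.commute)
  qed
qed

lemma exp_loss_state_distortion_le_prod:
  fixes Y :: "nat \<Rightarrow> 'w \<Rightarrow> real" and Jf :: "nat \<Rightarrow> real set" and g :: "real \<Rightarrow> 'e::metric_space"
  assumes ord: "\<And>i i' x z. i \<in> {1..k} \<Longrightarrow> i' \<in> {1..k} \<Longrightarrow> i < i' \<Longrightarrow> x \<in> Jf i \<Longrightarrow> z \<in> Jf i' \<Longrightarrow> x < z"
    and sub: "\<And>i. i \<in> {1..k} \<Longrightarrow> Jf i \<subseteq> {0..<1}"
    and Jm: "\<And>i. i \<in> {1..k} \<Longrightarrow> Jf i \<in> sets borel"
    and yJ: "\<And>j. j \<in> {1..k} \<Longrightarrow> Y j \<omega> \<in> Jf j"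
    and g: "g \<in> Dset" and e: "e \<ge> 0" and l: "l > 0"
    and center: "\<And>i y. i \<in> {1..k} \<Longrightarrow> y \<in> Jf i \<Longrightarrow> ennreal (e * \<bar>y - m i\<bar>) \<le> jump_distortion a g (Jf i) i y"
  shows "exp_loss l (state_distortion k a (Xproc k a Y \<omega>) g)
    \<le> (\<Prod>i\<in>{1..k}. ennreal (exp (- (l * e) * \<bar>Y i \<omega> - m i\<bar>)))"
proof -
  define S where "S = (\<Sum>i\<in>{1..k}. e * \<bar>Y i \<omega> - m i\<bar>)"
  have S0: "S \<ge> 0" unfolding S_def using e by (intro sum_nonneg) auto
  have "ennreal S = (\<Sum>i\<in>{1..k}. ennreal (e * \<bar>Y i \<omega> - m i\<bar>))"
    unfolding S_def using e by (subst sum_ennreal) auto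
  also have "\<dots> \<le> (\<Sum>i\<in>{1..k}. jump_distortion a g (Jf i) i (Y i \<omega>))"
    using center yJ by (intro sum_mono) auto
  also have "\<dots> \<le> state_distortion k a (Xproc k a Y \<omega>) g"
    by (rule sum_jump_distortion_le_state_distortion[where Y=Y and \<omega>=\<omega>, OF ord sub Jm yJ g])
  finally have le: "ennreal S \<le> state_distortion k a (Xproc k a Y \<omega>) g" .
  show ?thesis
  proof (cases "state_distortion k a (Xproc k a Y \<omega>) g")
    case (real \<rho>)
    have "S \<le> \<rho>" using le real S0 by simp
    hence "exp (- l * \<rho>) \<le> exp (- l * S)" using l by simp
    also have "- l * S = (\<Sum>i\<in>{1..k}. - (l * e) * \<bar>Y i \<omega> - m i\<bar>)"
      unfolding S_def by (simp add: sum_distrib_left mult.assoc)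
    also have "exp \<dots> = (\<Prod>i\<in>{1..k}. exp (- (l * e) * \<bar>Y i \<omega> - m i\<bar>))" by (rule exp_sum) simp
    finally show ?thesis using real by (simp add: exp_loss_def prod_ennreal ennreal_leI)
  qed (simp add: exp_loss_def)
qed

lemma AE_mem_of_distr_uniform:
  assumes Y: "Y \<in> borel_measurable M" and uniform: "distr M lborel Y = uniform_measure lborel A"
    and A: "A \<in> sets borel"
  shows "AE \<omega> in M. Y \<omega> \<in> A"
proof -
  have "AE x in distr M lborel Y. x \<in> A"
    unfolding uniform by (rule AE_uniform_measureI) (use A in auto)
  moreover have "Y \<in> measurable M lborel" using Y by simp
  ultimately show ?thesis by (rule AE_distrD[rotated])
qed

lemma nn_integral_indep_exp_neg_abs_le:
  fixes M :: "'w measure" and Y :: "'i \<Rightarrow> 'w \<Rightarrow> real" and A :: "'i \<Rightarrow> real set"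
  assumes "prob_space M" and ind: "prob_space.indep_vars M (\<lambda>_. borel) Y I"
    and uniform: "\<And>i. i \<in> I \<Longrightarrow> distr M lborel (Y i) = uniform_measure lborel (A i)"
    and A: "\<And>i. i \<in> I \<Longrightarrow> A i \<in> sets borel" "\<And>i. i \<in> I \<Longrightarrow> emeasure lborel (A i) = ennreal (L i)"
      "\<And>i. i \<in> I \<Longrightarrow> L i > 0"
    and I: "finite I" and c: "c > 0"
  shows "(\<integral>\<^sup>+\<omega>. (\<Prod>i\<in>I. ennreal (exp (- c * \<bar>Y i \<omega> - m i\<bar>))) \<partial>M) \<le> (\<Prod>i\<in>I. ennreal (2 / (c * L i)))"
proof -
  interpret prob_space M by fact
  have Y: "Y i \<in> borel_measurable M" if "i \<in> I" for i
    using ind that by (auto simp: indep_vars_def)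
  have "(\<integral>\<^sup>+\<omega>. (\<Prod>i\<in>I. ennreal (exp (- c * \<bar>Y i \<omega> - m i\<bar>))) \<partial>M)
      = (\<Prod>i\<in>I. \<integral>\<^sup>+\<omega>. ennreal (exp (- c * \<bar>Y i \<omega> - m i\<bar>)) \<partial>M)"
  proof (rule indep_vars_nn_integral[OF I])
    show "indep_vars (\<lambda>_. borel) (\<lambda>i \<omega>. ennreal (exp (- c * \<bar>Y i \<omega> - m i\<bar>))) I"
      by (rule indep_vars_compose2[OF ind, where Y="\<lambda>i y. ennreal (exp (- c * \<bar>y - m i\<bar>))"]) measurable
  qed auto
  also have "\<dots> \<le> (\<Prod>i\<in>I. ennreal (2 / (c * L i)))"
    using uniform A by (intro prod_mono_ennreal nn_integral_uniform_exp_neg_abs_le[OF Y _ _ _ _ c])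
  finally show ?thesis .
qed

lemma exp_moment_state_distortion_le:
  fixes M :: "'w measure" and Y :: "nat \<Rightarrow> 'w \<Rightarrow> real" and a :: "nat \<Rightarrow> 'e::metric_space"
    and g :: "real \<Rightarrow> 'e"
  assumes M: "prob_space M"
    and e: "\<epsilon>0 > 0" and l: "l > 0" and Is: "Is \<in> im_pi k"
    and jumps: "\<forall>i\<in>{1..k}. dist (a i) (a (i - 1)) \<ge> \<epsilon>0"
    and ind: "prob_space.indep_vars M (\<lambda>_. borel) Y {1..k}"
    and uniform: "\<forall>i\<in>{1..k}. distr M lborel (Y i) = uniform_measure lborel (dyad (Is ! (i - 1)))"
    and g: "g \<in> Dset"
  shows "(\<integral>\<^sup>+f. exp_loss l (state_distortion k a f g) \<partial>distr M Dmeas (Xproc k a Y))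
          \<le> ennreal (\<Prod>i\<in>{1..k}. 2 / (l * \<epsilon>0 * dyad_len (Is ! (i - 1))))"
proof -
  define Jf where "Jf i = dyad (Is ! (i - 1))" for i
  have Y: "Y i \<in> borel_measurable M" if "i \<in> {1..k}" for i
    using ind that by (auto simp: prob_space.indep_vars_def[OF M])
  have ord: "x < z" if "i \<in> {1..k}" "i' \<in> {1..k}" "i < i'" "x \<in> Jf i" "z \<in> Jf i'" for i i' x z
    using im_piD(3)[OF Is, of "i - 1" "i' - 1" x z] that unfolding Jf_def by auto
  have sub: "Jf i \<subseteq> {0..<1}" if "i \<in> {1..k}" for i
  proof -
    have "i - 1 < k" using that by auto
    thus ?thesis using im_piD(2)[OF Is] unfolding Jf_def by blast
  qed
  have "\<forall>i\<in>{1..k}. \<exists>m. \<forall>y\<in>Jf i. ennreal (\<epsilon>0 * \<bar>y - m\<bar>) \<le> jump_distortion a g (Jf i) i y"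
    using jump_distortion_center[OF g dyad_eq_interval _ e] jumps unfolding Jf_def by blast
  then obtain m where m: "\<And>i y. i \<in> {1..k} \<Longrightarrow> y \<in> Jf i \<Longrightarrow> ennreal (\<epsilon>0 * \<bar>y - m i\<bar>) \<le> jump_distortion a g (Jf i) i y"
    by metis
  have "AE \<omega> in M. \<forall>j\<in>{1..k}. Y j \<omega> \<in> Jf j"
    using Y uniform by (intro AE_finite_allI AE_mem_of_distr_uniform) (auto simp: Jf_def)
  hence "AE \<omega> in M. exp_loss l (state_distortion k a (Xproc k a Y \<omega>) g)
      \<le> (\<Prod>i\<in>{1..k}. ennreal (exp (- (l * \<epsilon>0) * \<bar>Y i \<omega> - m i\<bar>)))"
  proof eventually_elim
    case (elim \<omega>)
    show ?case
      by (rule exp_loss_state_distortion_le_prod[where Jf=Jf and Y=Y and \<omega>=\<omega>, OF ord sub _ _ g _ l m])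
         (use elim e in \<open>auto simp: Jf_def\<close>)
  qed
  moreover have "(\<lambda>f. exp_loss l (state_distortion k a f g)) \<in> borel_measurable Dmeas"
    using measurable_compose[OF measurable_Pair2'[of g] measurable_state_distortion] g
    by (simp add: space_Dmeas)
  ultimately have "(\<integral>\<^sup>+f. exp_loss l (state_distortion k a f g) \<partial>distr M Dmeas (Xproc k a Y))
      \<le> (\<integral>\<^sup>+\<omega>. (\<Prod>i\<in>{1..k}. ennreal (exp (- (l * \<epsilon>0) * \<bar>Y i \<omega> - m i\<bar>))) \<partial>M)"
    by (subst nn_integral_distr[OF measurable_Xproc[OF Y]]) (auto intro: nn_integral_mono_AE)
  also have "\<dots> \<le> (\<Prod>i\<in>{1..k}. ennreal (2 / (l * \<epsilon>0 * dyad_len (Is ! (i - 1)))))"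
    using uniform e l
    by (intro nn_integral_indep_exp_neg_abs_le[OF M ind _ _ emeasure_dyad dyad_len_pos]) auto
  also have "\<dots> = ennreal (\<Prod>i\<in>{1..k}. 2 / (l * \<epsilon>0 * dyad_len (Is ! (i - 1))))"
    using e l by (subst prod_ennreal) (auto simp: dyad_len_def)
  finally show ?thesis .
qed

lemma ln_prod_div_mult:
  fixes L :: "'i \<Rightarrow> real"
  assumes A: "finite A" and b: "b > 0" and c: "c > 0" and L: "\<And>i. i \<in> A \<Longrightarrow> L i > 0"
  shows "ln (\<Prod>i\<in>A. b / (c * L i)) = real (card A) * ln (b / c) - (\<Sum>i\<in>A. ln (L i))"
proof -
  have "ln (\<Prod>i\<in>A. b / (c * L i)) = (\<Sum>i\<in>A. ln (b / (c * L i)))"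
    using b c L by (intro ln_prod A) (use b c L in \<open>auto simp: less_le\<close>)
  also have "\<dots> = (\<Sum>i\<in>A. ln (b / c) - ln (L i))"
  proof (rule sum.cong[OF refl])
    fix i assume "i \<in> A"
    hence "L i > 0" by (rule L)
    thus "ln (b / (c * L i)) = ln (b / c) - ln (L i)" using b c by (simp add: ln_div ln_mult)
  qed
  finally show ?thesis by (simp add: sum_subtractf)
qed

text \<open>The choice of lam maximises (- ln C - r) / lam: by the previous lemma - ln C is
  k ln lam plus a constant, and at the optimum - ln C - r = k.\<close>

lemma rate_bound_identity:
  fixes L :: "nat \<Rightarrow> real" and k :: nat and e r lam C G :: real
  assumes k: "k \<ge> 1" and e: "e > 0" and L: "\<And>i. i \<in> {1..k} \<Longrightarrow> L i > 0"
    and G: "G = (\<Prod>i=1..k. L i) powr (1 / real k)"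
    and lam: "lam = 2 * exp (1 + r / real k) / (e * G)"
    and C: "C = (\<Prod>i\<in>{1..k}. 2 / (lam * e * L i))"
  shows "lam > 0" "C > 0"
    "(- ln C - r) / lam = e * (real k / (2 * exp 1)) * (\<Prod>i=1..k. L i) powr (1 / real k) * exp (- r / real k)"
proof -
  have "(\<Prod>i=1..k. L i) > 0" using L by (intro prod_pos) auto
  hence G_pos: "G > 0" unfolding G powr_gt_zero by linarith
  show lam_pos: "lam > 0" using G_pos e lam by simp
  show "C > 0" unfolding C using lam_pos e L by (intro prod_pos) auto
  have k_pos: "real k > 0" using k by simp
  have "ln (\<Prod>i=1..k. L i) = (\<Sum>i=1..k. ln (L i))"
    by (rule ln_prod) (use L in force)+
  hence "real k * ln G = (\<Sum>i=1..k. ln (L i))"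
    using k_pos unfolding G by simp
  moreover have "ln (2 / (lam * e)) = ln G - 1 - r / real k"
    using G_pos e unfolding lam by (simp add: ln_div ln_mult)
  moreover have "ln C = real k * ln (2 / (lam * e)) - (\<Sum>i=1..k. ln (L i))"
    unfolding C using ln_prod_div_mult[of "{1..k}" 2 "lam * e" L] lam_pos e L by simp
  ultimately have "ln C = - real k - r"
    using k_pos by (simp add: right_diff_distrib)
  hence "(- ln C - r) / lam = real k * e * G / (2 * exp 1 * exp (r / real k))"
    unfolding lam using G_pos e by (simp add: exp_add)
  also have "\<dots> = e * (real k / (2 * exp 1)) * G * exp (- r / real k)"
    by (simp add: exp_minus field_simps)
  finally show "(- ln C - r) / lam = e * (real k / (2 * exp 1)) * (\<Prod>i=1..k. L i) powr (1 / real k) * exp (- r / real k)"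
    unfolding G .
qed

theorem lemma6:
  fixes M :: "'w measure" and Y :: "nat \<Rightarrow> 'w \<Rightarrow> real"
    and a :: "nat \<Rightarrow> 'e::metric_space" and Is :: "(nat \<times> nat) list"
    and k :: nat and \<epsilon>0 r :: real
  assumes "prob_space M"
    and "\<epsilon>0 > 0" and "k \<ge> 1" and "Is \<in> im_pi k"
    and "inj_on a {0..k}"
    and "\<forall>i\<in>{1..k}. dist (a i) (a (i - 1)) \<ge> \<epsilon>0"
    and "prob_space.indep_vars M (\<lambda>_. borel) Y {1..k}"
    and "\<forall>i\<in>{1..k}. distr M lborel (Y i) = uniform_measure lborel (dyad (Is ! (i - 1)))"
    and "r \<ge> 0"
  shows "ennreal (\<epsilon>0 * (real k / (2 * exp 1))
                  * (\<Prod>i=1..k. dyad_len (Is ! (i - 1))) powr (1 / real k)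
                  * exp (- r / real k))
         \<le> distortion_rate r (distr M Dmeas (Xproc k a Y))"
proof -
  define L where "L i = dyad_len (Is ! (i - 1))" for i
  define G where "G = (\<Prod>i=1..k. L i) powr (1 / real k)"
  define lam where "lam = 2 * exp (1 + r / real k) / (\<epsilon>0 * G)"
  define C where "C = (\<Prod>i\<in>{1..k}. 2 / (lam * \<epsilon>0 * L i))"
  have "\<And>i. L i > 0" unfolding L_def by (rule dyad_len_pos)
  note rate = rate_bound_identity[OF assms(3,2) this G_def lam_def C_def]
  show ?thesis
    unfolding distortion_rate_def
  proof (rule INF_greatest, clarify)
    fix Q :: "((real \<Rightarrow> 'e) \<times> (real \<Rightarrow> 'e)) measure"
    assume Q: "prob_space Q" "sets Q = sets (Dmeas \<Otimes>\<^sub>M Dmeas)"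
      "distr Q Dmeas fst = distr M Dmeas (Xproc k a Y)" "mutual_inf Dmeas Dmeas Q \<le> ereal r"
    have "ennreal ((- ln C - r) / lam) \<le> (\<integral>\<^sup>+z. state_distortion k a (fst z) (snd z) \<partial>Q)"
      using Q(1,2,4) measurable_state_distortion rate(1,2)
    proof (rule nn_integral_ge_of_mutual_inf_le)
      fix g assume "g \<in> space (Dmeas :: (real \<Rightarrow> 'e) measure)"
      thus "(\<integral>\<^sup>+f. exp_loss lam (state_distortion k a (fst (f, g)) (snd (f, g))) \<partial>distr Q Dmeas fst) \<le> ennreal C"
        using exp_moment_state_distortion_le[OF assms(1,2) rate(1) assms(4,6,7,8)] Q(3)
        by (simp add: space_Dmeas C_def L_def)
    qed
    also have "\<dots> \<le> (\<integral>\<^sup>+z. rhoD (fst z) (snd z) \<partial>Q)"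
      by (intro nn_integral_mono state_distortion_le_rhoD[OF assms(5)])
    finally show "ennreal (\<epsilon>0 * (real k / (2 * exp 1)) * (\<Prod>i=1..k. dyad_len (Is ! (i - 1))) powr (1 / real k)
        * exp (- r / real k)) \<le> (\<integral>\<^sup>+z. rhoD (fst z) (snd z) \<partial>Q)"
      using rate(3) by (simp add: L_def)
  qed
qed

end
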